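(* Let $f,g:[0,\infty)\times\Omega\times\mathbb{R}\times\mathbb{R}\to\mathbb{R}$ satisfy (H1), (H2), (H3). Then for each $\varepsilon>0$ there exist bounded functions (processes) $a^{\varepsilon}_s(y,y',z)$, $b^{\varepsilon}_s(z,z',y')$, $c^{\varepsilon}_s(y,y',z)$, $d^{\varepsilon}_s(z,z',y')$ such that for all $s,y,y',z,z'$: \[ a^{\varepsilon}_s(y,y',z)+2G\big(c^{\varepsilon}_s(y,y',z)\big)\le-\mu, \] \[ \big|f(s,y,z)-f(s,y',z')-a^{\varepsilon}_s(y,y',z)(y-y')-b^{\varepsilon}_s(z,z',y')(z-z')\big|\le 4L_1\varepsilon, \] \[ \big|g(s,y,z)-g(s,y',z')-c^{\varepsilon}_s(y,y',z)(y-y')-d^{\varepsilon}_s(z,z',y')(z-z')\big|\le 4L_1\varepsilon. \] Moreover, for each $T>0$ and all $Y,Y',Z,Z'\in M^2_G(0,T)$, the processes $a^{\varepsilon}_s(Y_s,Y'_s,Z_s)$, $b^{\varepsilon}_s(Z_s,Z'_s,Y'_s)$, $c^{\varepsilon}_s(Y_s,Y'_s,Z_s)$, $d^{\varepsilon}_s(Z_s,Z'_s,Y'_s)$ belong to $M^2_G(0,T)$.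
   Context: Setting (one-dimensional $G$-Brownian motion): $\Omega=C_0([0,\infty);\mathbb{R})$ with canonical process $B$; $\hat{\mathbb{E}}$ is the $G$-expectation on $\Omega$ under which $B$ is a $G$-Brownian motion with $\bar\sigma^2=\hat{\mathbb{E}}[B_1^2]\ge-\hat{\mathbb{E}}[-B_1^2]=\underline\sigma^2>0$, so $G(a)=\frac12\hat{\mathbb{E}}[aB_1^2]=\frac12(\bar\sigma^2a^+-\underline\sigma^2a^-)$ for $a\in\mathbb{R}$; $\hat{\mathbb{E}}_t$ is the conditional $G$-expectation and $\langle B\rangle$ the quadratic variation of $B$. $L^p_G(\Omega_T)$ is the completion of cylinder functions $\varphi(B_{t_1},\dots,B_{t_k})$ ($\varphi$ bounded Lipschitz, $t_i\le T$) under $(\hat{\mathbb{E}}|\cdot|^p)^{1/p}$; $M^p_G(0,T)$ is the completion of simple processes $\sum_j\xi_j\mathbf 1_{[t_j,t_{j+1})}(t)$, $\xi_j\in L_{ip}(\Omega_{t_j})$, under $(\hat{\mathbb{E}}\int_0^T|\eta_s|^pds)^{1/p}$. Hypotheses on $f(t,\omega,y,z),g(t,\omega,y,z)$: (H1) there is $\beta>0$ with $f(\cdot,\cdot,y,z),g(\cdot,\cdot,y,z)\in M^{2+\beta}_G(0,n)$ for all $y,z$ and all $n>0$; (H2) $|f(t,y,z)-f(t,y',z')|+|g(t,y,z)-g(t,y',z')|\le L_1(|y-y'|+|z-z'|)$; (H3) there is $\mu>0$ with $(f(t,y,z)-f(t,y',z))(y-y')+2G\big((g(t,y,z)-g(t,y',z))(y-y')\big)\le-\mu|y-y'|^2$.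 *)

theory Defs
  imports "HOL-Probability.Probability"
begin

typedef path = "{w :: real \<Rightarrow> real. continuous_on {0..} w \<and> w 0 = 0 \<and> (\<forall>t<0. w t = 0)}"
  by (rule exI[of _ "\<lambda>_. 0"]) auto

definition Bp :: "real \<Rightarrow> path \<Rightarrow> real" where
  "Bp t w = Rep_path w t"

definition PathM :: "path measure" where
  "PathM = sigma UNIV {{w. Bp t w \<in> A} | t A. A \<in> sets borel}"

definition Filt :: "real \<Rightarrow> path measure" where
  "Filt t = sigma UNIV {{w. Bp s w \<in> A} | s A. 0 \<le> s \<and> s \<le> t \<and> A \<in> sets borel}"

definition Gfun :: "real \<Rightarrow> real \<Rightarrow> real \<Rightarrow> real" where
  "Gfun sl su a = (su\<^sup>2 * max a 0 - sl\<^sup>2 * max (- a) 0) / 2"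

section \<open>G-expectation via its representing family of probability measures\<close>

text \<open>Laws on path space under which B is a martingale with
  d<B>_t/dt in [sl^2, su^2], i.e. B martingale, B^2 - sl^2 t submartingale,
  B^2 - su^2 t supermartingale.\<close>
definition Pset :: "real \<Rightarrow> real \<Rightarrow> path measure set" where
  "Pset sl su = {P. prob_space P \<and> sets P = sets PathM \<and>
     (\<forall>t\<ge>0. integrable P (\<lambda>w. (Bp t w)\<^sup>2)) \<and>
     (\<forall>s t A. 0 \<le> s \<longrightarrow> s \<le> t \<longrightarrow> A \<in> sets (Filt s) \<longrightarrow>
        set_lebesgue_integral P A (Bp t) = set_lebesgue_integral P A (Bp s) \<and>
        set_lebesgue_integral P A (\<lambda>w. (Bp s w)\<^sup>2 - sl\<^sup>2 * s)
          \<le> set_lebesgue_integral P A (\<lambda>w. (Bp t w)\<^sup>2 - sl\<^sup>2 * t) \<and>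
        set_lebesgue_integral P A (\<lambda>w. (Bp t w)\<^sup>2 - su\<^sup>2 * t)
          \<le> set_lebesgue_integral P A (\<lambda>w. (Bp s w)\<^sup>2 - su\<^sup>2 * s))}"

text \<open>The M^p_G(0,T) seminorm to the p: upper expectation of int_0^T |eta_s|^p ds
  (outer integral, so that it is defined for arbitrary processes).\<close>
definition normM :: "real \<Rightarrow> real \<Rightarrow> real \<Rightarrow> real \<Rightarrow> (real \<Rightarrow> path \<Rightarrow> real) \<Rightarrow> ennreal" where
  "normM sl su p T eta = (SUP P\<in>Pset sl su.
     (INF h\<in>{h \<in> borel_measurable (lborel \<Otimes>\<^sub>M P).
              \<forall>x. ennreal (indicator {0..T} (fst x) * \<bar>eta (fst x) (snd x)\<bar> powr p) \<le> h x}.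
        \<integral>\<^sup>+ x. h x \<partial>(lborel \<Otimes>\<^sub>M P)))"

definition Lip_cyl :: "real \<Rightarrow> (path \<Rightarrow> real) set" where
  "Lip_cyl t = {xi. \<exists>(k::nat) (s::nat \<Rightarrow> real) (phi::(nat \<Rightarrow> real) \<Rightarrow> real) C L.
      (\<forall>i<k. 0 \<le> s i \<and> s i \<le> t) \<and> (\<forall>x. \<bar>phi x\<bar> \<le> C) \<and>
      (\<forall>x y. \<bar>phi x - phi y\<bar> \<le> L * (\<Sum>i<k. \<bar>x i - y i\<bar>)) \<and>
      xi = (\<lambda>w. phi (\<lambda>i. Bp (s i) w))}"

definition simple_proc :: "real \<Rightarrow> (real \<Rightarrow> path \<Rightarrow> real) \<Rightarrow> bool" where
  "simple_proc T eta \<longleftrightarrow> (\<exists>(N::nat) (tt::nat \<Rightarrow> real) (xi::nat \<Rightarrow> path \<Rightarrow> real).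
      tt 0 = 0 \<and> tt N = T \<and> (\<forall>j<N. tt j < tt (Suc j)) \<and> (\<forall>j<N. xi j \<in> Lip_cyl (tt j)) \<and>
      eta = (\<lambda>t w. \<Sum>j<N. xi j w * indicator {tt j..<tt (Suc j)} t))"

definition MG :: "real \<Rightarrow> real \<Rightarrow> real \<Rightarrow> real \<Rightarrow> (real \<Rightarrow> path \<Rightarrow> real) set" where
  "MG sl su p T = {eta. \<exists>u. (\<forall>n::nat. simple_proc T (u n)) \<and>
      (\<lambda>n. normM sl su p T (\<lambda>t w. eta t w - u n t w)) \<longlonglongrightarrow> 0}"

end

theory Submission
  imports Defs
begin

(* With delta = y - y' and F = f(y,z) - f(y',z), the coefficient a is the regularised quotient
   clip(F) delta / (delta^2 + eta^2) - mu eta^2 / (delta^2 + eta^2), and b, c, d are built in the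
   same way.  By (H2) the clipping at L1 |delta| is inactive, so a (y - y') + b (z - z') misses
   f(y,z) - f(y',z') by at most (L1 + mu/2) eta, and positive homogeneity of G turns (H3) into
   a + 2 G(c) <= -mu.  The regularised quotients are bounded and globally Lipschitz in (F, delta),
   so membership in M^2_G reduces to two closure properties of M^2_G(0,T): closure under Lipschitz
   maps of two processes (approximate by step processes, whose images are again step processes),
   and closure under substitution Y |-> f(., Y, Z) for a Lipschitz random field f with
   f(., y, z) in M^2_G.  For a step process Y the latter is a finite sum of step processes times
   f(., k h, z), obtained by piecewise linear interpolation in y on the grid h Z.  (H1) only enters
   through the inclusion of M^{2+beta}_G(0,n) in M^2_G(0,T) for T <= n. *)

lemma ennreal_le_cmult_Inf_add:
  fixes x R :: ennreal and A :: "ennreal set"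
  assumes "A \<noteq> {}" and le: "\<And>a. a \<in> A \<Longrightarrow> x \<le> ennreal c * a + R" and "0 \<le> c"
  shows "x \<le> ennreal c * Inf A + R"
proof (cases "c = 0")
  case True
  with \<open>A \<noteq> {}\<close> le show ?thesis by auto
next
  case False
  with \<open>0 \<le> c\<close> have c: "0 < c" by simp
  show ?thesis
  proof (cases "Inf A = \<top>")
    case True
    with c show ?thesis by (subst True) (simp add: ennreal_mult_top)
  next
    case False
    show ?thesis
    proof (rule ennreal_le_epsilon)
      fix e :: real assume e: "0 < e"
      obtain a where a: "a \<in> A" "a < Inf A + ennreal (e / c)"
        using INF_approx_ennreal[where e="e / c" and x="Inf A" and A=A and f=id] e c False by auto
      have "x \<le> ennreal c * a + R" using le[OF a(1)] .
      also have "\<dots> \<le> ennreal c * (Inf A + ennreal (e / c)) + R"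
        using a(2) by (intro add_mono mult_left_mono) auto
      also have "\<dots> = ennreal c * Inf A + R + ennreal e"
        using c e by (simp add: distrib_left ennreal_mult[symmetric] ac_simps)
      finally show "x \<le> ennreal c * Inf A + R + ennreal e" .
    qed
  qed
qed

definition outer_nn_integral :: "'a measure \<Rightarrow> ('a \<Rightarrow> ennreal) \<Rightarrow> ennreal" where
  "outer_nn_integral M f = (INF h\<in>{h \<in> borel_measurable M. \<forall>x. f x \<le> h x}. \<integral>\<^sup>+ x. h x \<partial>M)"

lemma outer_nn_integral_le_add:
  assumes le: "\<And>x. f x \<le> ennreal c1 * f1 x + ennreal c2 * f2 x + g x"
    and g: "g \<in> borel_measurable M" and "0 \<le> c1" "0 \<le> c2"
  shows "outer_nn_integral M f
    \<le> ennreal c1 * outer_nn_integral M f1 + (ennreal c2 * outer_nn_integral M f2 + (\<integral>\<^sup>+ x. g x \<partial>M))"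
proof -
  define D where "D = (\<lambda>f. {h \<in> borel_measurable M. \<forall>x. f x \<le> (h x :: ennreal)})"
  have D_ne: "(\<lambda>_. \<top>) \<in> D f" for f unfolding D_def by auto
  have combined: "outer_nn_integral M f
      \<le> ennreal c1 * (\<integral>\<^sup>+ x. h1 x \<partial>M) + (ennreal c2 * (\<integral>\<^sup>+ x. h2 x \<partial>M) + (\<integral>\<^sup>+ x. g x \<partial>M))"
    if h1: "h1 \<in> D f1" and h2: "h2 \<in> D f2" for h1 h2
  proof -
    let ?H = "\<lambda>x. ennreal c1 * h1 x + ennreal c2 * h2 x + g x"
    have m: "h1 \<in> borel_measurable M" "h2 \<in> borel_measurable M" using h1 h2 unfolding D_def by auto
    have "?H \<in> D f"
      unfolding D_def using m g h1 h2 le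
      by (auto simp: D_def intro!: order_trans[OF le] add_mono mult_left_mono)
    then have "outer_nn_integral M f \<le> (\<integral>\<^sup>+ x. ?H x \<partial>M)"
      unfolding outer_nn_integral_def D_def by (rule INF_lower)
    also have "\<dots> = ennreal c1 * (\<integral>\<^sup>+ x. h1 x \<partial>M) + ennreal c2 * (\<integral>\<^sup>+ x. h2 x \<partial>M) + (\<integral>\<^sup>+ x. g x \<partial>M)"
      using m g by (simp add: nn_integral_add nn_integral_cmult)
    finally show ?thesis by (simp add: ac_simps)
  qed
  have "outer_nn_integral M f
      \<le> ennreal c1 * Inf ((\<lambda>h. \<integral>\<^sup>+ x. h x \<partial>M) ` D f1)
        + (ennreal c2 * Inf ((\<lambda>h. \<integral>\<^sup>+ x. h x \<partial>M) ` D f2) + (\<integral>\<^sup>+ x. g x \<partial>M))"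
  proof (rule ennreal_le_cmult_Inf_add[OF _ _ \<open>0 \<le> c1\<close>])
    fix a assume "a \<in> (\<lambda>h. \<integral>\<^sup>+ x. h x \<partial>M) ` D f1"
    then obtain h1 where h1: "h1 \<in> D f1" "a = (\<integral>\<^sup>+ x. h1 x \<partial>M)" by auto
    have "outer_nn_integral M f
        \<le> ennreal c2 * Inf ((\<lambda>h. \<integral>\<^sup>+ x. h x \<partial>M) ` D f2) + (ennreal c1 * a + (\<integral>\<^sup>+ x. g x \<partial>M))"
      using combined[OF h1(1)] h1(2) D_ne
      by (intro ennreal_le_cmult_Inf_add[OF _ _ \<open>0 \<le> c2\<close>]) (auto simp: ac_simps)
    then show "outer_nn_integral M f
        \<le> ennreal c1 * a + (ennreal c2 * Inf ((\<lambda>h. \<integral>\<^sup>+ x. h x \<partial>M) ` D f2) + (\<integral>\<^sup>+ x. g x \<partial>M))"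
      by (simp add: ac_simps)
  qed (use D_ne in auto)
  then show ?thesis unfolding outer_nn_integral_def D_def .
qed

lemma normM_eq_outer_nn_integral:
  "normM sl su p T \<eta> = (SUP P\<in>Pset sl su. outer_nn_integral (lborel \<Otimes>\<^sub>M P)
     (\<lambda>x. ennreal (indicator {0..T} (fst x) * \<bar>\<eta> (fst x) (snd x)\<bar> powr p)))"
  unfolding normM_def outer_nn_integral_def ..

lemma space_Pset: "P \<in> Pset sl su \<Longrightarrow> space P = UNIV"
proof -
  assume "P \<in> Pset sl su"
  then have "sets P = sets PathM" unfolding Pset_def by auto
  moreover have "space PathM = UNIV" unfolding PathM_def by (rule space_measure_of) auto
  ultimately show ?thesis by (auto dest: sets_eq_imp_space_eq)
qed

lemma abs_powr_2: "\<bar>x::real\<bar> powr 2 = x\<^sup>2"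
  by (cases "x = 0") (auto simp: powr_numeral)

lemma abs_powr_2_le: "\<bar>x::real\<bar> \<le> c \<Longrightarrow> \<bar>x\<bar> powr 2 \<le> c\<^sup>2"
  using power_mono[of "\<bar>x\<bar>" c 2] by (simp add: abs_powr_2)

lemma normM_le_pointwise:
  assumes le: "\<And>t w. 0 \<le> t \<Longrightarrow> t < T \<Longrightarrow>
      \<bar>\<eta> t w\<bar> powr p \<le> c1 * \<bar>\<theta>1 t w\<bar> powr p1 + c2 * \<bar>\<theta>2 t w\<bar> powr p2 + c3"
    and "0 \<le> c1" "0 \<le> c2" "0 \<le> c3" and T: "0 \<le> T" "T \<le> T1" "T \<le> T2"
  shows "normM sl su p T \<eta>
    \<le> ennreal c1 * normM sl su p1 T1 \<theta>1 + ennreal c2 * normM sl su p2 T2 \<theta>2 + ennreal (c3 * T)"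
  unfolding normM_eq_outer_nn_integral[of _ _ p]
proof (rule SUP_least)
  fix P assume P: "P \<in> Pset sl su"
  then interpret prob_space P unfolding Pset_def by auto
  let ?M = "lborel \<Otimes>\<^sub>M P"
  let ?f = "\<lambda>p T \<eta> x. ennreal (indicator {0..T} (fst x) * \<bar>\<eta> (fst x) (snd x)\<bar> powr p)"
  \<comment> \<open>the bound is only assumed for \<open>t < T\<close>; the null slice \<open>t = T\<close> is absorbed by \<open>\<top>\<close>\<close>
  define g where "g = (\<lambda>x. ennreal c3 * indicator ({0..T} \<times> (UNIV :: path set)) x
    + \<top> * indicator ({T} \<times> (UNIV :: path set)) x)"
  have UNIV: "UNIV \<in> sets P" using sets.top[of P] space_Pset[OF P] by simp
  then have sets: "{0..T} \<times> UNIV \<in> sets ?M" "{T} \<times> UNIV \<in> sets ?M"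
    by (auto intro!: pair_measureI)
  have "?f p T \<eta> x \<le> ennreal c1 * ?f p1 T1 \<theta>1 x + ennreal c2 * ?f p2 T2 \<theta>2 x + g x" for x
  proof -
    obtain t w where x: "x = (t, w)" by (cases x)
    consider "0 \<le> t \<and> t < T" | "t = T" | "t \<notin> {0..T}" by fastforce
    then show ?thesis
    proof cases
      case 1
      then have "?f p T \<eta> x \<le> ennreal (c1 * \<bar>\<theta>1 t w\<bar> powr p1 + c2 * \<bar>\<theta>2 t w\<bar> powr p2 + c3)"
        using le x by (auto intro: ennreal_leI)
      also have "\<dots> = ennreal c1 * ?f p1 T1 \<theta>1 x + ennreal c2 * ?f p2 T2 \<theta>2 x + ennreal c3"
        using 1 x T \<open>0 \<le> c1\<close> \<open>0 \<le> c2\<close> \<open>0 \<le> c3\<close> by (simp add: ennreal_plus ennreal_mult)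
      also have "\<dots> \<le> ennreal c1 * ?f p1 T1 \<theta>1 x + ennreal c2 * ?f p2 T2 \<theta>2 x + g x"
        using 1 x unfolding g_def by (intro add_left_mono) auto
      finally show ?thesis .
    qed (auto simp: x g_def)
  qed
  then have "outer_nn_integral ?M (?f p T \<eta>)
      \<le> ennreal c1 * outer_nn_integral ?M (?f p1 T1 \<theta>1)
        + (ennreal c2 * outer_nn_integral ?M (?f p2 T2 \<theta>2) + (\<integral>\<^sup>+ x. g x \<partial>?M))"
    using sets \<open>0 \<le> c1\<close> \<open>0 \<le> c2\<close> unfolding g_def
    by (intro outer_nn_integral_le_add) auto
  also have "(\<integral>\<^sup>+ x. g x \<partial>?M) = ennreal (c3 * T)"
    using sets UNIV T \<open>0 \<le> c3\<close> space_Pset[OF P] emeasure_space_1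
    by (simp add: g_def nn_integral_add nn_integral_cmult_indicator emeasure_pair_measure_Times ennreal_mult)
  also have "ennreal c1 * outer_nn_integral ?M (?f p1 T1 \<theta>1) + (ennreal c2 * outer_nn_integral ?M (?f p2 T2 \<theta>2)
        + ennreal (c3 * T))
      \<le> ennreal c1 * normM sl su p1 T1 \<theta>1 + ennreal c2 * normM sl su p2 T2 \<theta>2 + ennreal (c3 * T)"
    unfolding normM_eq_outer_nn_integral using P
    by (simp add: add.assoc) (intro add_mono mult_left_mono SUP_upper order_refl; simp)
  finally show "outer_nn_integral ?M (?f p T \<eta>)
      \<le> ennreal c1 * normM sl su p1 T1 \<theta>1 + ennreal c2 * normM sl su p2 T2 \<theta>2 + ennreal (c3 * T)" .
qed

lemma normM_le_pointwise_bound: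
  assumes "\<And>t w. 0 \<le> t \<Longrightarrow> t < T \<Longrightarrow>
      \<bar>\<eta> t w\<bar> powr p \<le> c1 * \<bar>\<theta>1 t w\<bar> powr p1 + c2 * \<bar>\<theta>2 t w\<bar> powr p2 + c3"
    and "0 \<le> c1" "0 \<le> c2" "0 \<le> c3" "0 \<le> T" "T \<le> T1" "T \<le> T2"
    and e1: "normM sl su p1 T1 \<theta>1 \<le> ennreal e1" "0 \<le> e1"
    and e2: "normM sl su p2 T2 \<theta>2 \<le> ennreal e2" "0 \<le> e2"
  shows "normM sl su p T \<eta> \<le> ennreal (c1 * e1 + c2 * e2 + c3 * T)"
proof -
  have "normM sl su p T \<eta>
      \<le> ennreal c1 * normM sl su p1 T1 \<theta>1 + ennreal c2 * normM sl su p2 T2 \<theta>2 + ennreal (c3 * T)"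
    using assms(1-7) by (rule normM_le_pointwise)
  also have "\<dots> \<le> ennreal c1 * ennreal e1 + ennreal c2 * ennreal e2 + ennreal (c3 * T)"
    by (rule add_mono[OF add_mono[OF mult_left_mono[OF e1(1) zero_le] mult_left_mono[OF e2(1) zero_le]] order_refl])
  also have "\<dots> = ennreal (c1 * e1 + c2 * e2 + c3 * T)"
    using assms(2-5) e1(2) e2(2) by (simp add: ennreal_mult)
  finally show ?thesis .
qed

lemma normM_le_const:
  assumes "\<And>t w. 0 \<le> t \<Longrightarrow> t < T \<Longrightarrow> \<bar>\<eta> t w\<bar> powr p \<le> c" "0 \<le> c" "0 \<le> T"
  shows "normM sl su p T \<eta> \<le> ennreal (c * T)"
  using normM_le_pointwise[of T \<eta> p 0 \<eta> p 0 \<eta> p c T T sl su] assms by simp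

lemma normM_le_pointwise_bound1:
  assumes "\<And>t w. 0 \<le> t \<Longrightarrow> t < T \<Longrightarrow> \<bar>\<eta> t w\<bar> powr p \<le> c * \<bar>\<theta> t w\<bar> powr p1 + c0"
    and "0 \<le> c" "0 \<le> c0" "0 \<le> T" "T \<le> T1"
    and "normM sl su p1 T1 \<theta> \<le> ennreal e" "0 \<le> e"
  shows "normM sl su p T \<eta> \<le> ennreal (c * e + c0 * T)"
  using normM_le_pointwise_bound[of T \<eta> p c \<theta> p1 0 \<theta> p1 c0 T1 T1 sl su e e] assms by simp

lemma Lip_cyl_mono:
  assumes "t \<le> t'" shows "Lip_cyl t \<subseteq> Lip_cyl t'"
proof
  fix \<xi> assume "\<xi> \<in> Lip_cyl t"
  then obtain k s and phi :: "(nat \<Rightarrow> real) \<Rightarrow> real" and C L where A: "\<forall>i<k. 0 \<le> s i \<and> s i \<le> t"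
    "\<forall>x. \<bar>phi x\<bar> \<le> C" "\<forall>x y. \<bar>phi x - phi y\<bar> \<le> L * (\<Sum>i<k. \<bar>x i - y i\<bar>)"
    "\<xi> = (\<lambda>w. phi (\<lambda>i. Bp (s i) w))"
    unfolding Lip_cyl_def by blast
  moreover have "\<forall>i<k. 0 \<le> s i \<and> s i \<le> t'" using A(1) assms by force
  ultimately show "\<xi> \<in> Lip_cyl t'" unfolding Lip_cyl_def by blast
qed

lemma Lip_cyl_bounded: "\<xi> \<in> Lip_cyl t \<Longrightarrow> \<exists>C. \<forall>w. \<bar>\<xi> w\<bar> \<le> C"
  unfolding Lip_cyl_def by auto

lemma Lip_cyl_const: "(\<lambda>w. c) \<in> Lip_cyl t"
  unfolding Lip_cyl_def by (intro CollectI exI[of _ 0] exI[of _ "\<lambda>_. c"] exI[of _ "\<bar>c\<bar>"]) auto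

lemma sum_lessThan_add_split:
  "(\<Sum>i<k1 + k2. f i) = (\<Sum>i<k1. f i) + (\<Sum>i<k2. f (i + k1))" for f :: "nat \<Rightarrow> real"
  by (induction k2) (auto simp: ac_simps)

lemma Lip_cyl_common_times:
  assumes "\<xi>1 \<in> Lip_cyl t" "\<xi>2 \<in> Lip_cyl t"
  obtains k s and phi1 phi2 :: "(nat \<Rightarrow> real) \<Rightarrow> real" and C L
  where "\<forall>i<k. 0 \<le> s i \<and> s i \<le> t" "\<forall>x. \<bar>phi1 x\<bar> \<le> C \<and> \<bar>phi2 x\<bar> \<le> C"
    "\<forall>x y. \<bar>phi1 x - phi1 y\<bar> \<le> L * (\<Sum>i<k. \<bar>x i - y i\<bar>) \<and> \<bar>phi2 x - phi2 y\<bar> \<le> L * (\<Sum>i<k. \<bar>x i - y i\<bar>)"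
    "\<xi>1 = (\<lambda>w. phi1 (\<lambda>i. Bp (s i) w))" "\<xi>2 = (\<lambda>w. phi2 (\<lambda>i. Bp (s i) w))"
proof -
  obtain k1 s1 and phi1 :: "(nat \<Rightarrow> real) \<Rightarrow> real" and C1 L1 where A1: "\<forall>i<k1. 0 \<le> s1 i \<and> s1 i \<le> t"
    "\<forall>x. \<bar>phi1 x\<bar> \<le> C1" "\<forall>x y. \<bar>phi1 x - phi1 y\<bar> \<le> L1 * (\<Sum>i<k1. \<bar>x i - y i\<bar>)"
    "\<xi>1 = (\<lambda>w. phi1 (\<lambda>i. Bp (s1 i) w))"
    using assms(1) unfolding Lip_cyl_def by blast
  obtain k2 s2 and phi2 :: "(nat \<Rightarrow> real) \<Rightarrow> real" and C2 L2 where A2: "\<forall>i<k2. 0 \<le> s2 i \<and> s2 i \<le> t"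
    "\<forall>x. \<bar>phi2 x\<bar> \<le> C2" "\<forall>x y. \<bar>phi2 x - phi2 y\<bar> \<le> L2 * (\<Sum>i<k2. \<bar>x i - y i\<bar>)"
    "\<xi>2 = (\<lambda>w. phi2 (\<lambda>i. Bp (s2 i) w))"
    using assms(2) unfolding Lip_cyl_def by blast
  define s where "s = (\<lambda>i. if i < k1 then s1 i else s2 (i - k1))"
  define L where "L = max 0 (max L1 L2)"
  have sums: "(\<Sum>i<k1. \<bar>x i - y i\<bar>) \<le> (\<Sum>i<k1 + k2. \<bar>x i - y i\<bar>)"
    "(\<Sum>i<k2. \<bar>x (i + k1) - y (i + k1)\<bar>) \<le> (\<Sum>i<k1 + k2. \<bar>x i - y i\<bar>)" for x y :: "nat \<Rightarrow> real"
    unfolding sum_lessThan_add_split[of _ k1 k2] by (simp_all add: sum_nonneg)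
  have L: "0 \<le> L" "L1 \<le> L" "L2 \<le> L" unfolding L_def by auto
  define phi2' where "phi2' = (\<lambda>x. phi2 (\<lambda>i. x (i + k1)))"
  have "\<forall>i<k1 + k2. 0 \<le> s i \<and> s i \<le> t" using A1(1) A2(1) unfolding s_def by auto
  moreover have "\<forall>x. \<bar>phi1 x\<bar> \<le> max C1 C2 \<and> \<bar>phi2' x\<bar> \<le> max C1 C2"
    using A1(2) A2(2) by (auto simp: phi2'_def le_max_iff_disj)
  moreover have "\<forall>x y. \<bar>phi1 x - phi1 y\<bar> \<le> L * (\<Sum>i<k1 + k2. \<bar>x i - y i\<bar>) \<and>
      \<bar>phi2' x - phi2' y\<bar> \<le> L * (\<Sum>i<k1 + k2. \<bar>x i - y i\<bar>)"
  proof (intro allI conjI)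
    fix x y :: "nat \<Rightarrow> real"
    show "\<bar>phi1 x - phi1 y\<bar> \<le> L * (\<Sum>i<k1 + k2. \<bar>x i - y i\<bar>)"
      by (rule order_trans[OF A1(3)[rule_format] mult_mono[OF L(2) sums(1) L(1)]]) (simp add: sum_nonneg)
    show "\<bar>phi2' x - phi2' y\<bar> \<le> L * (\<Sum>i<k1 + k2. \<bar>x i - y i\<bar>)"
      unfolding phi2'_def
      by (rule order_trans[OF A2(3)[rule_format] mult_mono[OF L(3) sums(2) L(1)]]) (simp add: sum_nonneg)
  qed
  \<comment> \<open>by its Lipschitz bound, \<open>phi1\<close> only depends on the first \<open>k1\<close> coordinates\<close>
  moreover have "phi1 (\<lambda>i. Bp (s1 i) w) = phi1 (\<lambda>i. Bp (s i) w)" for w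
    using A1(3)[rule_format, of "\<lambda>i. Bp (s1 i) w" "\<lambda>i. Bp (s i) w"] by (simp add: s_def)
  then have "\<xi>1 = (\<lambda>w. phi1 (\<lambda>i. Bp (s i) w))" using A1(4) by simp
  moreover have "\<xi>2 = (\<lambda>w. phi2' (\<lambda>i. Bp (s i) w))" using A2(4) by (simp add: phi2'_def s_def)
  ultimately show thesis by (rule that)
qed

definition loc_lipschitz2 :: "(real \<Rightarrow> real \<Rightarrow> real) \<Rightarrow> bool" where
  "loc_lipschitz2 \<Phi> \<longleftrightarrow> (\<forall>B. \<exists>K\<ge>0. \<forall>a b a' b'. \<bar>a\<bar> \<le> B \<longrightarrow> \<bar>b\<bar> \<le> B \<longrightarrow> \<bar>a'\<bar> \<le> B \<longrightarrow> \<bar>b'\<bar> \<le> B \<longrightarrow>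
      \<bar>\<Phi> a b - \<Phi> a' b'\<bar> \<le> K * (\<bar>a - a'\<bar> + \<bar>b - b'\<bar>))"

lemma loc_lipschitz2I:
  assumes "\<And>a b a' b'. \<bar>\<Phi> a b - \<Phi> a' b'\<bar> \<le> K * (\<bar>a - a'\<bar> + \<bar>b - b'\<bar>)"
  shows "loc_lipschitz2 \<Phi>"
proof -
  have "0 \<le> K" using assms[of 1 0 0 0] by simp
  with assms show ?thesis unfolding loc_lipschitz2_def by blast
qed

lemma loc_lipschitz2_mult: "loc_lipschitz2 (\<lambda>a b. a * b)"
proof -
  have bound: "\<bar>a * b - a' * b'\<bar> \<le> max B 0 * (\<bar>a - a'\<bar> + \<bar>b - b'\<bar>)"
    if "\<bar>a\<bar> \<le> B" "\<bar>b'\<bar> \<le> B" for B a b a' b' :: real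
  proof -
    have "\<bar>a * b - a' * b'\<bar> = \<bar>a * (b - b') + b' * (a - a')\<bar>" by (simp add: algebra_simps)
    also have "\<dots> \<le> \<bar>a\<bar> * \<bar>b - b'\<bar> + \<bar>b'\<bar> * \<bar>a - a'\<bar>" by (metis abs_mult abs_triangle_ineq)
    also have "\<dots> \<le> max B 0 * \<bar>b - b'\<bar> + max B 0 * \<bar>a - a'\<bar>"
      using that by (intro add_mono mult_right_mono) auto
    finally show ?thesis by (simp add: algebra_simps)
  qed
  show ?thesis
    unfolding loc_lipschitz2_def
  proof
    fix B :: real
    show "\<exists>K\<ge>0. \<forall>a b a' b'. \<bar>a\<bar> \<le> B \<longrightarrow> \<bar>b\<bar> \<le> B \<longrightarrow> \<bar>a'\<bar> \<le> B \<longrightarrow> \<bar>b'\<bar> \<le> B \<longrightarrow>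
        \<bar>a * b - a' * b'\<bar> \<le> K * (\<bar>a - a'\<bar> + \<bar>b - b'\<bar>)"
      by (intro exI[of _ "max B 0"] conjI allI impI max.cobounded2 bound)
  qed
qed

lemma Lip_cyl_comp2:
  assumes \<Phi>: "loc_lipschitz2 \<Phi>" and "\<xi>1 \<in> Lip_cyl t" "\<xi>2 \<in> Lip_cyl t"
  shows "(\<lambda>w. \<Phi> (\<xi>1 w) (\<xi>2 w)) \<in> Lip_cyl t"
proof -
  obtain k s and phi1 phi2 :: "(nat \<Rightarrow> real) \<Rightarrow> real" and C L
    where A: "\<forall>i<k. 0 \<le> s i \<and> s i \<le> t" "\<forall>x. \<bar>phi1 x\<bar> \<le> C \<and> \<bar>phi2 x\<bar> \<le> C"
      "\<forall>x y. \<bar>phi1 x - phi1 y\<bar> \<le> L * (\<Sum>i<k. \<bar>x i - y i\<bar>) \<and> \<bar>phi2 x - phi2 y\<bar> \<le> L * (\<Sum>i<k. \<bar>x i - y i\<bar>)"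
      "\<xi>1 = (\<lambda>w. phi1 (\<lambda>i. Bp (s i) w))" "\<xi>2 = (\<lambda>w. phi2 (\<lambda>i. Bp (s i) w))"
    by (rule Lip_cyl_common_times[OF assms(2,3)])
  have C: "0 \<le> C" using A(2) abs_ge_zero order_trans by blast
  obtain K where K: "0 \<le> K" "\<And>a b a' b'. \<bar>a\<bar> \<le> C \<Longrightarrow> \<bar>b\<bar> \<le> C \<Longrightarrow> \<bar>a'\<bar> \<le> C \<Longrightarrow> \<bar>b'\<bar> \<le> C \<Longrightarrow>
      \<bar>\<Phi> a b - \<Phi> a' b'\<bar> \<le> K * (\<bar>a - a'\<bar> + \<bar>b - b'\<bar>)"
    using \<Phi> unfolding loc_lipschitz2_def by meson
  define phi where "phi = (\<lambda>x. \<Phi> (phi1 x) (phi2 x))"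
  have bound: "\<bar>phi x\<bar> \<le> \<bar>\<Phi> 0 0\<bar> + K * (C + C)" for x
  proof -
    have "\<bar>phi x - \<Phi> 0 0\<bar> \<le> K * (\<bar>phi1 x - 0\<bar> + \<bar>phi2 x - 0\<bar>)"
      unfolding phi_def using A(2) C by (intro K(2)) auto
    also have "\<dots> \<le> K * (C + C)" using A(2) K(1) by (intro mult_left_mono add_mono) auto
    finally show ?thesis by linarith
  qed
  have lip: "\<bar>phi x - phi y\<bar> \<le> (2 * K * L) * (\<Sum>i<k. \<bar>x i - y i\<bar>)" for x y
  proof -
    have "\<bar>phi x - phi y\<bar> \<le> K * (\<bar>phi1 x - phi1 y\<bar> + \<bar>phi2 x - phi2 y\<bar>)"
      unfolding phi_def using A(2) by (intro K(2)) auto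
    also have "\<dots> \<le> K * (L * (\<Sum>i<k. \<bar>x i - y i\<bar>) + L * (\<Sum>i<k. \<bar>x i - y i\<bar>))"
      using A(3) K(1) by (intro mult_left_mono add_mono) auto
    finally show ?thesis by (simp add: algebra_simps)
  qed
  show ?thesis
    unfolding Lip_cyl_def A(4,5)
    by (intro CollectI exI[of _ k] exI[of _ s] exI[of _ phi] exI[of _ "\<bar>\<Phi> 0 0\<bar> + K * (C + C)"]
        exI[of _ "2 * K * L"] conjI allI A(1) bound lip) (simp add: phi_def)
qed

text \<open>An intrinsic form of \<open>simple_proc\<close> that does not fix the partition, so that Lipschitz
  images and restrictions of step processes are again step processes without re-indexing.\<close>

definition step_process :: "real \<Rightarrow> (real \<Rightarrow> path \<Rightarrow> real) \<Rightarrow> bool" where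
  "step_process T \<eta> \<longleftrightarrow> (\<exists>P. finite P \<and> 0 \<in> P \<and> T \<in> P \<and> P \<subseteq> {0..T} \<and>
     (\<forall>t w. \<not> (0 \<le> t \<and> t < T) \<longrightarrow> \<eta> t w = 0) \<and>
     (\<forall>t. 0 \<le> t \<and> t < T \<longrightarrow> \<eta> t \<in> Lip_cyl t) \<and>
     (\<forall>t t'. 0 \<le> t \<longrightarrow> t \<le> t' \<longrightarrow> t' < T \<longrightarrow> (\<forall>p\<in>P. \<not> (t < p \<and> p \<le> t')) \<longrightarrow> \<eta> t = \<eta> t'))"

lemma grid_less:
  fixes tt :: "nat \<Rightarrow> real"
  assumes "\<forall>j<N. tt j < tt (Suc j)" "i < j" "j \<le> N"
  shows "tt i < tt j"
  using assms(2,3)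
proof (induction j)
  case (Suc j)
  have "tt j < tt (Suc j)" using assms(1) Suc.prems by auto
  then show ?case using Suc by (cases "i = j") auto
qed simp

lemma grid_le:
  fixes tt :: "nat \<Rightarrow> real"
  assumes "\<forall>j<N. tt j < tt (Suc j)" "i \<le> j" "j \<le> N"
  shows "tt i \<le> tt j"
  using grid_less[OF assms(1), of i j] assms by (cases "i = j") auto

lemma grid_cell:
  fixes tt :: "nat \<Rightarrow> real"
  assumes "\<forall>j<N. tt j < tt (Suc j)" "tt 0 \<le> t" "t < tt N"
  shows "\<exists>j<N. tt j \<le> t \<and> t < tt (Suc j)"
  using assms
proof (induction N)
  case (Suc M)
  show ?case
  proof (cases "t < tt M")
    case True
    with Suc obtain j where "j < M" "tt j \<le> t \<and> t < tt (Suc j)" by auto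
    then show ?thesis by (intro exI[of _ j]) auto
  qed (use Suc.prems in auto)
qed simp

lemma grid_sum_indicator:
  fixes tt x :: "nat \<Rightarrow> real"
  assumes mono: "\<forall>j<N. tt j < tt (Suc j)" and j: "j < N" "tt j \<le> t" "t < tt (Suc j)"
  shows "(\<Sum>i<N. x i * indicator {tt i..<tt (Suc i)} t) = x j"
proof -
  have "t \<notin> {tt i..<tt (Suc i)}" if "i < N" "i \<noteq> j" for i
  proof (cases "i < j")
    case True
    then show ?thesis using grid_le[OF mono, of "Suc i" j] j by auto
  next
    case False
    then show ?thesis using grid_le[OF mono, of "Suc j" i] that j by auto
  qed
  then have "(\<Sum>i<N. x i * indicator {tt i..<tt (Suc i)} t) = (\<Sum>i\<in>{j}. x i * indicator {tt i..<tt (Suc i)} t)"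
    using j by (intro sum.mono_neutral_right) auto
  then show ?thesis using j by simp
qed

lemma grid_sum_indicator_outside:
  fixes tt x :: "nat \<Rightarrow> real"
  assumes mono: "\<forall>j<N. tt j < tt (Suc j)" and t: "\<not> (tt 0 \<le> t \<and> t < tt N)"
  shows "(\<Sum>i<N. x i * indicator {tt i..<tt (Suc i)} t) = 0"
proof (intro sum.neutral ballI)
  fix i assume "i \<in> {..<N}"
  then have "tt 0 \<le> tt i" "tt (Suc i) \<le> tt N" using grid_le[OF mono, of 0 i] grid_le[OF mono, of "Suc i" N] by auto
  then show "x i * indicator {tt i..<tt (Suc i)} t = 0" using t by auto
qed

lemma finite_set_grid:
  fixes P :: "real set"
  assumes "finite P" "0 \<in> P" "T \<in> P" "P \<subseteq> {0..T}" "0 < T"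
  obtains N tt where "tt 0 = 0" "tt N = T" "\<forall>j<N. tt j < tt (Suc j)" "tt ` {..N} = P"
proof -
  define L where "L = sorted_list_of_set P"
  define N where "N = length L - 1"
  define tt where "tt = (\<lambda>j. L ! j)"
  have sorted: "sorted_wrt (<) L" unfolding L_def by (simp add: strict_sorted_iff)
  have "card {0, T} \<le> card P" using assms by (intro card_mono) auto
  then have len: "length L = Suc N" using \<open>0 < T\<close> unfolding L_def N_def by simp
  have "tt ` {..N} = set L"
    unfolding tt_def set_conv_nth len by (auto simp: image_def less_Suc_eq_le)
  then have set: "tt ` {..N} = P" unfolding L_def using assms(1) by simp
  have mono: "\<forall>j<N. tt j < tt (Suc j)"
    using sorted_wrt_nth_less[OF sorted] len unfolding tt_def by simp
  have le: "tt i \<le> tt j" if "i \<le> j" "j \<le> N" for i j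
    using grid_le[OF mono that] .
  have range: "0 \<le> tt j" "tt j \<le> T" if "j \<le> N" for j
    using set that assms(4) by auto
  obtain i0 iT where "i0 \<le> N" "tt i0 = 0" "iT \<le> N" "tt iT = T"
    using set assms(2,3) by (metis atMost_iff imageE)
  then have "tt 0 = 0" "tt N = T"
    using le[of 0 i0] le[of iT N] range[of 0] range[of N] by auto
  then show thesis by (intro that[of tt N] mono set)
qed

lemma simple_proc_imp_step_process:
  assumes "simple_proc T \<eta>"
  shows "step_process T \<eta>"
proof -
  obtain N tt xi where A: "tt 0 = 0" "tt N = T" "\<forall>j<N. tt j < tt (Suc j)" "\<forall>j<N. xi j \<in> Lip_cyl (tt j)"
      "\<eta> = (\<lambda>t w. \<Sum>j<N. xi j w * indicator {tt j..<tt (Suc j)} t)"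
    using assms unfolding simple_proc_def by blast
  note mono = A(3)
  have val: "\<eta> t = xi j" if "j < N" "tt j \<le> t" "t < tt (Suc j)" for t j
    unfolding A(5) using grid_sum_indicator[OF mono that] by auto
  show ?thesis
    unfolding step_process_def
  proof (intro exI[of _ "tt ` {..N}"] conjI allI impI)
    show "finite (tt ` {..N})" "0 \<in> tt ` {..N}" "T \<in> tt ` {..N}"
      using A(1,2) by force+
    show "tt ` {..N} \<subseteq> {0..T}" using grid_le[OF mono, of 0] grid_le[OF mono, of _ N] A(1,2) by auto
    show "\<eta> t w = 0" if "\<not> (0 \<le> t \<and> t < T)" for t w
      unfolding A(5) using grid_sum_indicator_outside[OF mono] that A(1,2) by auto
  next
    fix t assume "0 \<le> t \<and> t < T"
    then obtain j where j: "j < N" "tt j \<le> t" "t < tt (Suc j)"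
      using grid_cell[OF mono, of t] A(1,2) by auto
    then show "\<eta> t \<in> Lip_cyl t" using val[OF j] A(4) Lip_cyl_mono[of "tt j" t] by auto
  next
    fix t t' assume t: "0 \<le> t" "t \<le> t'" "t' < T" and np: "\<forall>p\<in>tt ` {..N}. \<not> (t < p \<and> p \<le> t')"
    obtain j where j: "j < N" "tt j \<le> t" "t < tt (Suc j)"
      using grid_cell[OF mono, of t] A(1,2) t by auto
    have "t' < tt (Suc j)" using np j t by (metis atMost_iff image_eqI less_Suc_eq_le not_less)
    then show "\<eta> t = \<eta> t'" using val[OF j] val[of j t'] j t by auto
  qed
qed

lemma step_process_imp_simple_proc:
  assumes "0 < T" and "step_process T \<eta>"
  shows "simple_proc T \<eta>"
proof -
  obtain P where P: "finite P" "0 \<in> P" "T \<in> P" "P \<subseteq> {0..T}"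
    "\<forall>t w. \<not> (0 \<le> t \<and> t < T) \<longrightarrow> \<eta> t w = 0"
    "\<forall>t. 0 \<le> t \<and> t < T \<longrightarrow> \<eta> t \<in> Lip_cyl t"
    "\<forall>t t'. 0 \<le> t \<longrightarrow> t \<le> t' \<longrightarrow> t' < T \<longrightarrow> (\<forall>p\<in>P. \<not> (t < p \<and> p \<le> t')) \<longrightarrow> \<eta> t = \<eta> t'"
    using assms(2) unfolding step_process_def by blast
  obtain N tt where tt: "tt 0 = 0" "tt N = T" "\<forall>j<N. tt j < tt (Suc j)" "tt ` {..N} = P"
    by (rule finite_set_grid[OF P(1-4) assms(1)])
  note mono = tt(3)
  have cell: "0 \<le> tt j" "tt j < T" if "j < N" for j
    using grid_le[OF mono, of 0 j] grid_less[OF mono, of j N] that tt(1,2) by auto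
  have sum: "\<eta> t w = (\<Sum>j<N. \<eta> (tt j) w * indicator {tt j..<tt (Suc j)} t)" for t w
  proof (cases "0 \<le> t \<and> t < T")
    case True
    then obtain j where j: "j < N" "tt j \<le> t" "t < tt (Suc j)"
      using grid_cell[OF mono, of t] tt(1,2) by auto
    have "\<not> (tt j < tt i \<and> tt i \<le> t)" if "i \<le> N" for i
      using grid_le[OF mono, of i j] grid_le[OF mono, of "Suc j" i] that j by (cases "i \<le> j") auto
    then have "\<eta> (tt j) = \<eta> t" using P(7)[rule_format, of "tt j" t] cell[OF j(1)] j True tt(4) by blast
    then show ?thesis using grid_sum_indicator[OF mono j, of "\<lambda>j. \<eta> (tt j) w"] by simp
  next
    case False
    then show ?thesis using P(5) grid_sum_indicator_outside[OF mono, of t] tt(1,2) by auto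
  qed
  have "\<forall>j<N. \<eta> (tt j) \<in> Lip_cyl (tt j)" using cell P(6) by blast
  then show ?thesis
    unfolding simple_proc_def using tt(1-3)
    by (intro exI[of _ N] exI[of _ tt] exI[of _ "\<lambda>j. \<eta> (tt j)"] conjI ext sum) auto
qed

lemma simple_proc_bounded:
  assumes "simple_proc T \<eta>"
  obtains C where "\<And>t w. \<bar>\<eta> t w\<bar> \<le> C"
proof -
  obtain N tt xi where A: "\<forall>j<N. xi j \<in> Lip_cyl (tt j)"
      "\<eta> = (\<lambda>t w. \<Sum>j<N. xi j w * indicator {tt j..<tt (Suc j)} t)"
    using assms unfolding simple_proc_def by blast
  have "\<forall>j. \<exists>c. j < N \<longrightarrow> (\<forall>w. \<bar>xi j w\<bar> \<le> c)" using A(1) Lip_cyl_bounded by blast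
  then obtain C where C: "\<And>j w. j < N \<Longrightarrow> \<bar>xi j w\<bar> \<le> C j" by metis
  have "\<bar>\<eta> t w\<bar> \<le> (\<Sum>j<N. C j)" for t w
  proof -
    have "\<bar>\<eta> t w\<bar> \<le> (\<Sum>j<N. \<bar>xi j w * indicator {tt j..<tt (Suc j)} t\<bar>)"
      unfolding A(2) by (rule sum_abs)
    also have "\<dots> \<le> (\<Sum>j<N. C j)"
      using C by (intro sum_mono) (auto simp: abs_mult indicator_def intro: order_trans[OF _ C])
    finally show ?thesis .
  qed
  then show thesis by (rule that)
qed

definition mask :: "real \<Rightarrow> (real \<Rightarrow> path \<Rightarrow> real) \<Rightarrow> real \<Rightarrow> path \<Rightarrow> real" where
  "mask T X = (\<lambda>t w. if 0 \<le> t \<and> t < T then X t w else 0)"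

lemma step_process_comp2:
  assumes "step_process T u1" "step_process T u2" and \<Phi>: "loc_lipschitz2 \<Phi>"
  shows "step_process T (mask T (\<lambda>t w. \<Phi> (u1 t w) (u2 t w)))"
proof -
  obtain P1 where P1: "finite P1" "0 \<in> P1" "T \<in> P1" "P1 \<subseteq> {0..T}"
    "\<forall>t. 0 \<le> t \<and> t < T \<longrightarrow> u1 t \<in> Lip_cyl t"
    "\<forall>t t'. 0 \<le> t \<longrightarrow> t \<le> t' \<longrightarrow> t' < T \<longrightarrow> (\<forall>p\<in>P1. \<not> (t < p \<and> p \<le> t')) \<longrightarrow> u1 t = u1 t'"
    using assms(1) unfolding step_process_def by blast
  obtain P2 where P2: "finite P2" "P2 \<subseteq> {0..T}"
    "\<forall>t. 0 \<le> t \<and> t < T \<longrightarrow> u2 t \<in> Lip_cyl t"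
    "\<forall>t t'. 0 \<le> t \<longrightarrow> t \<le> t' \<longrightarrow> t' < T \<longrightarrow> (\<forall>p\<in>P2. \<not> (t < p \<and> p \<le> t')) \<longrightarrow> u2 t = u2 t'"
    using assms(2) unfolding step_process_def by blast
  show ?thesis
    unfolding step_process_def
  proof (intro exI[of _ "P1 \<union> P2"] conjI allI impI)
    show "finite (P1 \<union> P2)" "0 \<in> P1 \<union> P2" "T \<in> P1 \<union> P2" "P1 \<union> P2 \<subseteq> {0..T}" using P1 P2 by auto
    show "mask T (\<lambda>t w. \<Phi> (u1 t w) (u2 t w)) t w = 0" if "\<not> (0 \<le> t \<and> t < T)" for t w
      using that unfolding mask_def by auto
    show "mask T (\<lambda>t w. \<Phi> (u1 t w) (u2 t w)) t \<in> Lip_cyl t" if "0 \<le> t \<and> t < T" for t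
      using that Lip_cyl_comp2[OF \<Phi>, of "u1 t" t "u2 t"] P1(5) P2(3) unfolding mask_def by auto
    show "mask T (\<lambda>t w. \<Phi> (u1 t w) (u2 t w)) t = mask T (\<lambda>t w. \<Phi> (u1 t w) (u2 t w)) t'"
      if "0 \<le> t" "t \<le> t'" "t' < T" "\<forall>p\<in>P1 \<union> P2. \<not> (t < p \<and> p \<le> t')" for t t'
      using that P1(6)[rule_format, of t t'] P2(4)[rule_format, of t t'] unfolding mask_def by (auto simp: fun_eq_iff)
  qed
qed

lemma simple_proc_comp2:
  assumes "0 < T" "simple_proc T u1" "simple_proc T u2" "loc_lipschitz2 \<Phi>"
  shows "simple_proc T (mask T (\<lambda>t w. \<Phi> (u1 t w) (u2 t w)))"
  using assms(1) step_process_comp2[OF simple_proc_imp_step_process[OF assms(2)]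
      simple_proc_imp_step_process[OF assms(3)] assms(4)]
  by (rule step_process_imp_simple_proc)

lemma step_process_mask:
  assumes "step_process T' u" and "0 < T" "T \<le> T'"
  shows "step_process T (mask T u)"
proof -
  obtain P where P: "finite P" "0 \<in> P" "P \<subseteq> {0..T'}"
    "\<forall>t. 0 \<le> t \<and> t < T' \<longrightarrow> u t \<in> Lip_cyl t"
    "\<forall>t t'. 0 \<le> t \<longrightarrow> t \<le> t' \<longrightarrow> t' < T' \<longrightarrow> (\<forall>p\<in>P. \<not> (t < p \<and> p \<le> t')) \<longrightarrow> u t = u t'"
    using assms(1) unfolding step_process_def by blast
  show ?thesis
    unfolding step_process_def
  proof (intro exI[of _ "insert T (P \<inter> {0..T})"] conjI allI impI)
    show "finite (insert T (P \<inter> {0..T}))" "0 \<in> insert T (P \<inter> {0..T})" "T \<in> insert T (P \<inter> {0..T})"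
      "insert T (P \<inter> {0..T}) \<subseteq> {0..T}" using P(1,2) assms(2) by auto
    show "mask T u t w = 0" if "\<not> (0 \<le> t \<and> t < T)" for t w
      using that unfolding mask_def by auto
    show "mask T u t \<in> Lip_cyl t" if "0 \<le> t \<and> t < T" for t
      using that P(4) assms(3) unfolding mask_def by auto
    show "mask T u t = mask T u t'"
      if "0 \<le> t" "t \<le> t'" "t' < T" "\<forall>p\<in>insert T (P \<inter> {0..T}). \<not> (t < p \<and> p \<le> t')" for t t'
    proof -
      have "\<forall>p\<in>P. \<not> (t < p \<and> p \<le> t')" using that P(3) by auto
      then show ?thesis using that P(5)[rule_format, of t t'] assms(3) unfolding mask_def by (auto simp: fun_eq_iff)
    qed
  qed
qed

section \<open>Closure properties of \<open>M_G\<close>\<close>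

lemma MG_intro:
  assumes approx: "\<And>e. 0 < e \<Longrightarrow> \<exists>u. simple_proc T u \<and> normM sl su p T (\<lambda>t w. \<eta> t w - u t w) \<le> ennreal (C * e)"
  shows "\<eta> \<in> MG sl su p T"
proof -
  have "\<forall>n. \<exists>u. simple_proc T u \<and>
      normM sl su p T (\<lambda>t w. \<eta> t w - u t w) \<le> ennreal (C * inverse (real (Suc n)))"
    using approx by simp
  from choice[OF this] obtain U where U: "\<forall>n. simple_proc T (U n) \<and>
      normM sl su p T (\<lambda>t w. \<eta> t w - U n t w) \<le> ennreal (C * inverse (real (Suc n)))" ..
  have "(\<lambda>n. ennreal (C * inverse (real (Suc n)))) \<longlonglongrightarrow> 0"
    using tendsto_ennrealI[OF tendsto_mult_left_zero[OF LIMSEQ_inverse_real_of_nat, of C]]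
    by (simp add: ac_simps)
  then have "(\<lambda>n. normM sl su p T (\<lambda>t w. \<eta> t w - U n t w)) \<longlonglongrightarrow> 0"
    by (rule tendsto_sandwich[OF _ _ tendsto_const, rotated 2]) (use U in simp_all)
  then show ?thesis unfolding MG_def using U by blast
qed

lemma MG_approx:
  assumes "\<eta> \<in> MG sl su p T" "0 < e"
  shows "\<exists>u. simple_proc T u \<and> normM sl su p T (\<lambda>t w. \<eta> t w - u t w) \<le> ennreal e"
proof -
  obtain u where u: "\<forall>n::nat. simple_proc T (u n)" "(\<lambda>n. normM sl su p T (\<lambda>t w. \<eta> t w - u n t w)) \<longlonglongrightarrow> 0"
    using assms(1) unfolding MG_def by blast
  have "\<forall>\<^sub>F n in sequentially. normM sl su p T (\<lambda>t w. \<eta> t w - u n t w) < ennreal e"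
    using order_tendstoD(2)[OF u(2)] assms(2) by simp
  then obtain n where "normM sl su p T (\<lambda>t w. \<eta> t w - u n t w) < ennreal e"
    by (meson eventually_sequentially order_refl)
  then show ?thesis using u(1) less_imp_le by blast
qed

lemma sq_add_le: "(a + b)\<^sup>2 \<le> 2 * a\<^sup>2 + 2 * b\<^sup>2" for a b :: real
  by (smt (verit) sum_squares_bound power2_sum)

lemma MG_closed:
  assumes "0 < T" "0 \<le> C"
    and approx: "\<And>e. 0 < e \<Longrightarrow> \<exists>\<theta>\<in>MG sl su 2 T. normM sl su 2 T (\<lambda>t w. \<eta> t w - \<theta> t w) \<le> ennreal (C * e)"
  shows "\<eta> \<in> MG sl su 2 T"
proof (rule MG_intro[where C="2 * C + 2"])
  fix e :: real assume e: "0 < e"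
  obtain \<theta> where \<theta>: "\<theta> \<in> MG sl su 2 T" "normM sl su 2 T (\<lambda>t w. \<eta> t w - \<theta> t w) \<le> ennreal (C * e)"
    using approx[OF e] by blast
  obtain u where u: "simple_proc T u" "normM sl su 2 T (\<lambda>t w. \<theta> t w - u t w) \<le> ennreal e"
    using MG_approx[OF \<theta>(1) e] by blast
  have "normM sl su 2 T (\<lambda>t w. \<eta> t w - u t w) \<le> ennreal (2 * (C * e) + 2 * e + 0 * T)"
  proof (rule normM_le_pointwise_bound[OF _ _ _ _ _ order_refl order_refl \<theta>(2) _ u(2)])
    fix t w
    show "\<bar>\<eta> t w - u t w\<bar> powr 2 \<le> 2 * \<bar>\<eta> t w - \<theta> t w\<bar> powr 2 + 2 * \<bar>\<theta> t w - u t w\<bar> powr 2 + 0"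
      using sq_add_le[of "\<eta> t w - \<theta> t w" "\<theta> t w - u t w"] by (simp add: abs_powr_2)
  qed (use \<open>0 < T\<close> \<open>0 \<le> C\<close> e in auto)
  moreover have "2 * (C * e) + 2 * e + 0 * T = (2 * C + 2) * e" by (simp add: algebra_simps)
  ultimately show "\<exists>u. simple_proc T u \<and> normM sl su 2 T (\<lambda>t w. \<eta> t w - u t w) \<le> ennreal ((2 * C + 2) * e)"
    using u(1) by auto
qed

lemma MG_comp2:
  assumes T: "0 < T" and K: "\<And>a b a' b'. \<bar>\<Phi> a b - \<Phi> a' b'\<bar> \<le> K * (\<bar>a - a'\<bar> + \<bar>b - b'\<bar>)"
    and "\<eta>1 \<in> MG sl su 2 T" "\<eta>2 \<in> MG sl su 2 T"
  shows "(\<lambda>t w. \<Phi> (\<eta>1 t w) (\<eta>2 t w)) \<in> MG sl su 2 T"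
proof (rule MG_intro[where C="4 * K\<^sup>2"])
  fix e :: real assume e: "0 < e"
  obtain u1 where u1: "simple_proc T u1" "normM sl su 2 T (\<lambda>t w. \<eta>1 t w - u1 t w) \<le> ennreal e"
    using MG_approx[OF assms(3) e] by blast
  obtain u2 where u2: "simple_proc T u2" "normM sl su 2 T (\<lambda>t w. \<eta>2 t w - u2 t w) \<le> ennreal e"
    using MG_approx[OF assms(4) e] by blast
  define v where "v = mask T (\<lambda>t w. \<Phi> (u1 t w) (u2 t w))"
  have v: "simple_proc T v"
    unfolding v_def using T u1(1) u2(1) loc_lipschitz2I[OF K] by (rule simple_proc_comp2)
  have "normM sl su 2 T (\<lambda>t w. \<Phi> (\<eta>1 t w) (\<eta>2 t w) - v t w) \<le> ennreal (2 * K\<^sup>2 * e + 2 * K\<^sup>2 * e + 0 * T)"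
  proof (rule normM_le_pointwise_bound[OF _ _ _ _ _ order_refl order_refl u1(2) _ u2(2)])
    fix t w assume "0 \<le> t" "t < T"
    then have "\<bar>\<Phi> (\<eta>1 t w) (\<eta>2 t w) - v t w\<bar> \<le> K * (\<bar>\<eta>1 t w - u1 t w\<bar> + \<bar>\<eta>2 t w - u2 t w\<bar>)"
      using K unfolding v_def mask_def by simp
    then have "\<bar>\<Phi> (\<eta>1 t w) (\<eta>2 t w) - v t w\<bar>\<^sup>2 \<le> K\<^sup>2 * (\<bar>\<eta>1 t w - u1 t w\<bar> + \<bar>\<eta>2 t w - u2 t w\<bar>)\<^sup>2"
      by (metis abs_ge_zero power2_abs power_mono power_mult_distrib)
    also have "\<dots> \<le> K\<^sup>2 * (2 * \<bar>\<eta>1 t w - u1 t w\<bar>\<^sup>2 + 2 * \<bar>\<eta>2 t w - u2 t w\<bar>\<^sup>2)"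
      by (intro mult_left_mono sq_add_le) auto
    finally show "\<bar>\<Phi> (\<eta>1 t w) (\<eta>2 t w) - v t w\<bar> powr 2
        \<le> 2 * K\<^sup>2 * \<bar>\<eta>1 t w - u1 t w\<bar> powr 2 + 2 * K\<^sup>2 * \<bar>\<eta>2 t w - u2 t w\<bar> powr 2 + 0"
      by (simp add: abs_powr_2 algebra_simps)
  qed (use T e in auto)
  then have "normM sl su 2 T (\<lambda>t w. \<Phi> (\<eta>1 t w) (\<eta>2 t w) - v t w) \<le> ennreal (4 * K\<^sup>2 * e)"
    by (simp add: mult_ac)
  then show "\<exists>u. simple_proc T u \<and> normM sl su 2 T (\<lambda>t w. \<Phi> (\<eta>1 t w) (\<eta>2 t w) - u t w) \<le> ennreal (4 * K\<^sup>2 * e)"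
    using v by blast
qed

lemma MG_add:
  assumes "0 < T" "\<eta>1 \<in> MG sl su 2 T" "\<eta>2 \<in> MG sl su 2 T"
  shows "(\<lambda>t w. \<eta>1 t w + \<eta>2 t w) \<in> MG sl su 2 T"
  by (rule MG_comp2[OF assms(1) _ assms(2,3), of _ 1]) (smt (verit))

lemma MG_diff:
  assumes "0 < T" "\<eta>1 \<in> MG sl su 2 T" "\<eta>2 \<in> MG sl su 2 T"
  shows "(\<lambda>t w. \<eta>1 t w - \<eta>2 t w) \<in> MG sl su 2 T"
  by (rule MG_comp2[OF assms(1) _ assms(2,3), of _ 1]) (smt (verit))

lemma MG_zero:
  assumes "0 < T" shows "(\<lambda>t w. 0) \<in> MG sl su 2 T"
proof (rule MG_intro[where C=0])
  have "step_process T (\<lambda>t w. 0)"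
    unfolding step_process_def using assms Lip_cyl_const[of 0] by (intro exI[of _ "{0, T}"]) auto
  then have "simple_proc T (\<lambda>t w. 0)" by (rule step_process_imp_simple_proc[OF assms])
  moreover have "normM sl su 2 T (\<lambda>t w. 0 - 0) \<le> ennreal (0 * T)"
    by (rule normM_le_const) (use assms in auto)
  ultimately show "\<exists>u. simple_proc T u \<and> normM sl su 2 T (\<lambda>t w. 0 - u t w) \<le> ennreal (0 * e)" for e
    by auto
qed

lemma MG_sum:
  assumes "0 < T" "finite S" "\<And>k. k \<in> S \<Longrightarrow> X k \<in> MG sl su 2 T"
  shows "(\<lambda>t w. \<Sum>k\<in>S. X k t w) \<in> MG sl su 2 T"
  using assms(2,3)
proof (induction S rule: finite_induct)
  case empty
  then show ?case using MG_zero[OF assms(1)] by simp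
next
  case (insert x F)
  then have "(\<lambda>t w. X x t w + (\<Sum>k\<in>F. X k t w)) \<in> MG sl su 2 T"
    by (intro MG_add[OF assms(1)]) auto
  then show ?case using insert by simp
qed

lemma MG_mult_simple:
  assumes T: "0 < T" and \<rho>: "simple_proc T \<rho>" and \<theta>: "\<theta> \<in> MG sl su 2 T"
  shows "(\<lambda>t w. \<rho> t w * \<theta> t w) \<in> MG sl su 2 T"
proof -
  obtain C where C: "\<And>t w. \<bar>\<rho> t w\<bar> \<le> C" using simple_proc_bounded[OF \<rho>] by blast
  show ?thesis
  proof (rule MG_intro[where C="C\<^sup>2"])
    fix e :: real assume e: "0 < e"
    obtain u where u: "simple_proc T u" "normM sl su 2 T (\<lambda>t w. \<theta> t w - u t w) \<le> ennreal e"
      using MG_approx[OF \<theta> e] by blast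
    define v where "v = mask T (\<lambda>t w. \<rho> t w * u t w)"
    have v: "simple_proc T v"
      unfolding v_def using T \<rho> u(1) loc_lipschitz2_mult by (rule simple_proc_comp2)
    have "normM sl su 2 T (\<lambda>t w. \<rho> t w * \<theta> t w - v t w) \<le> ennreal (C\<^sup>2 * e + 0 * T)"
    proof (rule normM_le_pointwise_bound1[OF _ _ _ _ order_refl u(2)])
      fix t w assume "0 \<le> t" "t < T"
      then have "\<bar>\<rho> t w * \<theta> t w - v t w\<bar> = \<bar>\<rho> t w\<bar> * \<bar>\<theta> t w - u t w\<bar>"
        unfolding v_def mask_def by (simp add: abs_mult right_diff_distrib[symmetric])
      also have "\<dots> \<le> C * \<bar>\<theta> t w - u t w\<bar>" using C by (intro mult_right_mono) auto
      finally show "\<bar>\<rho> t w * \<theta> t w - v t w\<bar> powr 2 \<le> C\<^sup>2 * \<bar>\<theta> t w - u t w\<bar> powr 2 + 0"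
        unfolding abs_powr_2 by (metis abs_ge_zero add_0_right power2_abs power_mono power_mult_distrib)
    qed (use T e in auto)
    then show "\<exists>u. simple_proc T u \<and> normM sl su 2 T (\<lambda>t w. \<rho> t w * \<theta> t w - u t w) \<le> ennreal (C\<^sup>2 * e)"
      using v by auto
  qed
qed

lemma abs_powr_2_split:
  fixes x d \<beta> :: real
  assumes "0 < d" "0 < \<beta>"
  shows "\<bar>x\<bar> powr 2 \<le> d powr (- \<beta>) * \<bar>x\<bar> powr (2 + \<beta>) + d\<^sup>2"
proof (cases "\<bar>x\<bar> \<le> d")
  case True
  then have "\<bar>x\<bar> powr 2 \<le> d\<^sup>2" by (rule abs_powr_2_le)
  moreover have "0 \<le> d powr (- \<beta>) * \<bar>x\<bar> powr (2 + \<beta>)" by simp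
  ultimately show ?thesis by linarith
next
  case False
  then have "d powr \<beta> \<le> \<bar>x\<bar> powr \<beta>" using assms by (intro powr_mono2) auto
  then have "\<bar>x\<bar> powr 2 * d powr \<beta> \<le> \<bar>x\<bar> powr (2 + \<beta>)" by (simp add: powr_add mult_left_mono)
  then have "\<bar>x\<bar> powr 2 \<le> d powr (- \<beta>) * \<bar>x\<bar> powr (2 + \<beta>)"
    using assms(1) by (simp add: powr_minus field_simps)
  moreover have "0 \<le> d\<^sup>2" by simp
  ultimately show ?thesis by linarith
qed

lemma MG_restrict:
  assumes T: "0 < T" "T \<le> T'" and \<beta>: "0 < \<beta>" and \<theta>: "\<theta> \<in> MG sl su (2 + \<beta>) T'"
  shows "\<theta> \<in> MG sl su 2 T"
proof (rule MG_intro[where C="1 + T"])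
  fix e :: real assume e: "0 < e"
  define d where "d = sqrt e"
  have d: "0 < d" "d\<^sup>2 = e" unfolding d_def using e by auto
  obtain u where u: "simple_proc T' u" "normM sl su (2 + \<beta>) T' (\<lambda>t w. \<theta> t w - u t w) \<le> ennreal (d powr \<beta> * e)"
    using MG_approx[OF \<theta>, of "d powr \<beta> * e"] d e by auto
  have "simple_proc T (mask T u)"
    using simple_proc_imp_step_process[OF u(1)] T
    by (intro step_process_imp_simple_proc step_process_mask) auto
  moreover have "normM sl su 2 T (\<lambda>t w. \<theta> t w - mask T u t w) \<le> ennreal (d powr (- \<beta>) * (d powr \<beta> * e) + d\<^sup>2 * T)"
  proof (rule normM_le_pointwise_bound1[OF _ _ _ _ T(2) u(2)])
    fix t w assume "0 \<le> t" "t < T"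
    then show "\<bar>\<theta> t w - mask T u t w\<bar> powr 2 \<le> d powr (- \<beta>) * \<bar>\<theta> t w - u t w\<bar> powr (2 + \<beta>) + d\<^sup>2"
      using abs_powr_2_split[OF d(1) \<beta>] unfolding mask_def by simp
  qed (use T d e in auto)
  moreover have "d powr (- \<beta>) * (d powr \<beta> * e) + d\<^sup>2 * T = (1 + T) * e"
    using d by (simp add: powr_minus field_simps)
  ultimately show "\<exists>u. simple_proc T u \<and> normM sl su 2 T (\<lambda>t w. \<theta> t w - u t w) \<le> ennreal ((1 + T) * e)"
    by auto
qed

lemma MG_of_higher_moment:
  assumes "0 < T" "0 < \<beta>" and "\<And>n::nat. 0 < n \<Longrightarrow> \<theta> \<in> MG sl su (2 + \<beta>) (real n)"
  shows "\<theta> \<in> MG sl su 2 T"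
proof -
  have "T \<le> real (Suc (nat \<lceil>T\<rceil>))" by linarith
  then show ?thesis using MG_restrict[OF assms(1) _ assms(2)] assms(3)[of "Suc (nat \<lceil>T\<rceil>)"] by simp
qed

section \<open>Substitution into Lipschitz random fields\<close>

definition tent :: "int \<Rightarrow> real \<Rightarrow> real" where
  "tent k y = max 0 (1 - \<bar>y - of_int k\<bar>)"

lemma tent_lipschitz: "\<bar>tent k y - tent k y'\<bar> \<le> \<bar>y - y'\<bar>"
  unfolding tent_def by (auto simp: max_def abs_if)

lemma tent_sum:
  fixes M :: nat
  assumes "- real M < y" "y < real M"
  shows "(\<Sum>k\<in>{- int M..int M}. tent k y * g k)
    = (1 - (y - \<lfloor>y\<rfloor>)) * g \<lfloor>y\<rfloor> + (y - \<lfloor>y\<rfloor>) * g (\<lfloor>y\<rfloor> + 1)"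
proof -
  define j where "j = \<lfloor>y\<rfloor>"
  have j: "of_int j \<le> y" "y < of_int j + 1" "- int M \<le> j" "j + 1 \<le> int M"
    using assms unfolding j_def by linarith+
  have "tent j y = 1 - (y - j)" "tent (j + 1) y = y - j"
    using j(1,2) unfolding tent_def by auto
  moreover have "tent k y = 0" if "k \<noteq> j" "k \<noteq> j + 1" for k
  proof -
    have "k \<le> j - 1 \<or> j + 2 \<le> k" using that by linarith
    then have "(of_int k :: real) \<le> of_int (j - 1) \<or> of_int (j + 2) \<le> (of_int k :: real)"
      by (simp only: of_int_le_iff)
    then show ?thesis using j(1,2) unfolding tent_def by auto
  qed
  then have "(\<Sum>k\<in>{- int M..int M} - {j} - {j + 1}. tent k y * g k) = 0" by simp
  moreover have "j \<in> {- int M..int M}" "j + 1 \<in> {- int M..int M} - {j}" using j(3,4) by auto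
  ultimately show ?thesis
    by (simp add: sum.remove[of _ j] sum.remove[of _ "j + 1"] j_def[symmetric])
qed

lemma tent_interpolation_error:
  fixes M :: nat
  assumes "- real M < y" "y < real M" and lip: "\<And>a b. \<bar>g a - g b\<bar> \<le> L * \<bar>a - b\<bar>"
  shows "\<bar>g y - (\<Sum>k\<in>{- int M..int M}. tent k y * g (of_int k))\<bar> \<le> L"
proof -
  define j where "j = \<lfloor>y\<rfloor>"
  define \<theta> where "\<theta> = y - j"
  have \<theta>: "0 \<le> \<theta>" "\<theta> < 1" unfolding \<theta>_def j_def by linarith+
  have L: "0 \<le> L" using lip[of 1 0] by simp
  have "\<bar>g y - (\<Sum>k\<in>{- int M..int M}. tent k y * g (of_int k))\<bar>
      = \<bar>(1 - \<theta>) * (g y - g j) + \<theta> * (g y - g (j + 1))\<bar>"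
    using tent_sum[OF assms(1,2), of "\<lambda>k. g (of_int k)"] unfolding \<theta>_def j_def by (simp add: algebra_simps)
  also have "\<dots> \<le> (1 - \<theta>) * \<bar>g y - g j\<bar> + \<theta> * \<bar>g y - g (j + 1)\<bar>"
    using \<theta> by (metis abs_mult abs_of_nonneg abs_triangle_ineq diff_ge_0_iff_ge less_imp_le)
  also have "\<dots> \<le> (1 - \<theta>) * (L * \<theta>) + \<theta> * (L * (1 - \<theta>))"
    using lip[of y j] lip[of y "j + 1"] \<theta> unfolding \<theta>_def by (intro add_mono mult_left_mono) (auto simp: algebra_simps)
  also have "\<dots> = L * (2 * \<theta> * (1 - \<theta>))" by (simp add: algebra_simps)
  also have "\<dots> \<le> L * 1"
    using L zero_le_power2[of "2 * \<theta> - 1"] by (intro mult_left_mono) (auto simp: power2_eq_square algebra_simps)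
  finally show ?thesis by simp
qed

lemma MG_tent_interpolant:
  assumes T: "0 < T" and "0 < h" "finite S" and fam: "\<And>z. (\<lambda>t w. \<phi> t w z) \<in> MG sl su 2 T"
    and u: "simple_proc T u"
  shows "(\<lambda>t w. \<Sum>k\<in>S. mask T (\<lambda>t w. tent k (u t w / h)) t w * \<phi> t w (of_int k * h)) \<in> MG sl su 2 T"
proof (rule MG_sum[OF T \<open>finite S\<close>])
  fix k
  have "\<bar>tent k (a / h) - tent k (a' / h)\<bar> \<le> (1 / h) * (\<bar>a - a'\<bar> + \<bar>b - b'\<bar>)" for a b a' b'
  proof -
    have "\<bar>tent k (a / h) - tent k (a' / h)\<bar> \<le> \<bar>a / h - a' / h\<bar>" by (rule tent_lipschitz)
    also have "\<dots> = (1 / h) * \<bar>a - a'\<bar>" using \<open>0 < h\<close> by (simp add: field_simps abs_divide)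
    also have "\<dots> \<le> (1 / h) * (\<bar>a - a'\<bar> + \<bar>b - b'\<bar>)" using \<open>0 < h\<close> by (intro mult_left_mono) auto
    finally show ?thesis .
  qed
  then have "simple_proc T (mask T (\<lambda>t w. (\<lambda>a b. tent k (a / h)) (u t w) (u t w)))"
    using T u by (intro simple_proc_comp2 loc_lipschitz2I)
  then show "(\<lambda>t w. mask T (\<lambda>t w. tent k (u t w / h)) t w * \<phi> t w (of_int k * h)) \<in> MG sl su 2 T"
    using MG_mult_simple[OF T _ fam] by simp
qed

lemma MG_subst_simple:
  assumes T: "0 < T" and fam: "\<And>z. (\<lambda>t w. \<phi> t w z) \<in> MG sl su 2 T"
    and lip: "\<And>t w z z'. 0 \<le> t \<Longrightarrow> \<bar>\<phi> t w z - \<phi> t w z'\<bar> \<le> L * \<bar>z - z'\<bar>"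
    and u: "simple_proc T u"
  shows "(\<lambda>t w. \<phi> t w (u t w)) \<in> MG sl su 2 T"
proof (rule MG_closed[OF T, where C="L\<^sup>2 * T"])
  fix e :: real assume e: "0 < e"
  obtain C where C: "\<And>t w. \<bar>u t w\<bar> \<le> C" using simple_proc_bounded[OF u] by blast
  define h where "h = sqrt e"
  have h: "0 < h" "h\<^sup>2 = e" unfolding h_def using e by auto
  obtain M :: nat where "C < real M * h" using ex_less_of_nat_mult[OF h(1)] by blast
  then have Mh: "\<bar>u t w\<bar> < real M * h" for t w using C[of t w] by linarith
  have M: "- real M < u t w / h" "u t w / h < real M" for t w
    using Mh[of t w] h(1) by (simp_all add: field_simps abs_less_iff)
  define S where "S = {- int M..int M}"
  \<comment> \<open>piecewise linear interpolation of \<open>z \<mapsto> \<phi> t w z\<close> on the grid \<open>h \<int>\<close>, evaluated at \<open>u\<close>\<close>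
  define \<theta> where "\<theta> = (\<lambda>t w. \<Sum>k\<in>S. mask T (\<lambda>t w. tent k (u t w / h)) t w * \<phi> t w (of_int k * h))"
  have "\<theta> \<in> MG sl su 2 T"
    unfolding \<theta>_def S_def by (rule MG_tent_interpolant[OF T h(1) _ fam u]) simp
  moreover have "normM sl su 2 T (\<lambda>t w. \<phi> t w (u t w) - \<theta> t w) \<le> ennreal ((L * h)\<^sup>2 * T)"
  proof (rule normM_le_const)
    fix t w assume t: "0 \<le> t" "t < T"
    have "\<bar>\<phi> t w (u t w / h * h) - (\<Sum>k\<in>S. tent k (u t w / h) * \<phi> t w (of_int k * h))\<bar> \<le> L * h"
      unfolding S_def
    proof (rule tent_interpolation_error[OF M])
      show "\<bar>\<phi> t w (a * h) - \<phi> t w (b * h)\<bar> \<le> L * h * \<bar>a - b\<bar>" for a b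
        using lip[OF t(1), of w "a * h" "b * h"] h(1) by (simp add: abs_mult left_diff_distrib[symmetric] mult_ac)
    qed
    then have "\<bar>\<phi> t w (u t w) - \<theta> t w\<bar> \<le> L * h"
      using t h(1) unfolding \<theta>_def mask_def by simp
    then show "\<bar>\<phi> t w (u t w) - \<theta> t w\<bar> powr 2 \<le> (L * h)\<^sup>2"
      by (rule abs_powr_2_le)
  qed (use T in auto)
  moreover have "(L * h)\<^sup>2 * T = L\<^sup>2 * T * e" using h(2) by (simp add: power_mult_distrib)
  ultimately show "\<exists>\<theta>\<in>MG sl su 2 T. normM sl su 2 T (\<lambda>t w. \<phi> t w (u t w) - \<theta> t w) \<le> ennreal (L\<^sup>2 * T * e)"
    by auto
qed (use T in simp)

lemma MG_subst:
  assumes T: "0 < T" and fam: "\<And>z. (\<lambda>t w. \<phi> t w z) \<in> MG sl su 2 T"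
    and lip: "\<And>t w z z'. 0 \<le> t \<Longrightarrow> \<bar>\<phi> t w z - \<phi> t w z'\<bar> \<le> L * \<bar>z - z'\<bar>"
    and Z: "Z \<in> MG sl su 2 T"
  shows "(\<lambda>t w. \<phi> t w (Z t w)) \<in> MG sl su 2 T"
proof (rule MG_closed[OF T, where C="L\<^sup>2"])
  fix e :: real assume e: "0 < e"
  obtain u where u: "simple_proc T u" "normM sl su 2 T (\<lambda>t w. Z t w - u t w) \<le> ennreal e"
    using MG_approx[OF Z e] by blast
  have "normM sl su 2 T (\<lambda>t w. \<phi> t w (Z t w) - \<phi> t w (u t w)) \<le> ennreal (L\<^sup>2 * e + 0 * T)"
  proof (rule normM_le_pointwise_bound1[OF _ _ _ _ order_refl u(2)])
    fix t w assume "0 \<le> t" "t < T"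
    have "\<bar>\<phi> t w (Z t w) - \<phi> t w (u t w)\<bar> \<le> \<bar>L * \<bar>Z t w - u t w\<bar>\<bar>"
      by (rule order_trans[OF lip[OF \<open>0 \<le> t\<close>] abs_ge_self])
    then have "\<bar>\<phi> t w (Z t w) - \<phi> t w (u t w)\<bar> powr 2 \<le> \<bar>L * \<bar>Z t w - u t w\<bar>\<bar>\<^sup>2"
      by (rule abs_powr_2_le)
    then show "\<bar>\<phi> t w (Z t w) - \<phi> t w (u t w)\<bar> powr 2 \<le> L\<^sup>2 * \<bar>Z t w - u t w\<bar> powr 2 + 0"
      by (simp add: abs_powr_2 power_mult_distrib)
  qed (use T e in auto)
  then show "\<exists>\<theta>\<in>MG sl su 2 T. normM sl su 2 T (\<lambda>t w. \<phi> t w (Z t w) - \<theta> t w) \<le> ennreal (L\<^sup>2 * e)"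
    using MG_subst_simple[OF T fam lip u(1)] by auto
qed simp

lemma MG_subst2:
  assumes T: "0 < T" and fam: "\<And>y z. (\<lambda>t w. \<phi> t w y z) \<in> MG sl su 2 T"
    and lip: "\<And>t w y y' z z'. 0 \<le> t \<Longrightarrow> \<bar>\<phi> t w y z - \<phi> t w y' z'\<bar> \<le> L * (\<bar>y - y'\<bar> + \<bar>z - z'\<bar>)"
    and Y: "Y \<in> MG sl su 2 T" and Z: "Z \<in> MG sl su 2 T"
  shows "(\<lambda>t w. \<phi> t w (Y t w) (Z t w)) \<in> MG sl su 2 T"
proof (rule MG_subst[OF T _ _ Y, where \<phi>="\<lambda>t w y. \<phi> t w y (Z t w)"])
  show "(\<lambda>t w. \<phi> t w y (Z t w)) \<in> MG sl su 2 T" for y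
    by (rule MG_subst[OF T fam _ Z]) (use lip[of _ _ y _ y] in simp)
  show "\<bar>\<phi> t w y (Z t w) - \<phi> t w y' (Z t w)\<bar> \<le> L * \<bar>y - y'\<bar>" if "0 \<le> t" for t w y y'
    using lip[OF that, of w y "Z t w" y' "Z t w"] by simp
qed

section \<open>Regularised difference quotients\<close>

definition clip :: "real \<Rightarrow> real \<Rightarrow> real \<Rightarrow> real" where
  "clip L F \<delta> = max (- (L * \<bar>\<delta>\<bar>)) (min (L * \<bar>\<delta>\<bar>) F)"

definition reg_inv :: "real \<Rightarrow> real \<Rightarrow> real" where
  "reg_inv \<eta> \<delta> = \<delta> / (\<delta>\<^sup>2 + \<eta>\<^sup>2)"

definition reg_weight :: "real \<Rightarrow> real \<Rightarrow> real" where
  "reg_weight \<eta> \<delta> = \<eta>\<^sup>2 / (\<delta>\<^sup>2 + \<eta>\<^sup>2)"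

text \<open>\<open>reg_quot L \<eta> F \<delta>\<close> stands in for \<open>F / \<delta>\<close>: it is bounded by \<open>L\<close> and globally Lipschitz in
  \<open>(F, \<delta>)\<close>, and for \<open>\<bar>F\<bar> \<le> L \<bar>\<delta>\<bar>\<close> it equals \<open>F \<delta> / (\<delta>\<^sup>2 + \<eta>\<^sup>2)\<close>, which misses \<open>F / \<delta>\<close> only
  by the factor \<open>\<delta>\<^sup>2 / (\<delta>\<^sup>2 + \<eta>\<^sup>2)\<close>.\<close>

definition reg_quot :: "real \<Rightarrow> real \<Rightarrow> real \<Rightarrow> real \<Rightarrow> real" where
  "reg_quot L \<eta> F \<delta> = clip L F \<delta> * reg_inv \<eta> \<delta>"

lemma clamp_lipschitz: "\<bar>max (- m) (min m F) - max (- m') (min m' F')\<bar> \<le> \<bar>F - F'\<bar> + \<bar>m - m'\<bar>" for m m' F F' :: real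
  by (simp add: max_def min_def abs_if)

lemma clip_lipschitz:
  assumes L: "0 \<le> L"
  shows "\<bar>clip L F \<delta> - clip L F' \<delta>'\<bar> \<le> \<bar>F - F'\<bar> + L * \<bar>\<delta> - \<delta>'\<bar>"
proof -
  have "\<bar>L * \<bar>\<delta>\<bar> - L * \<bar>\<delta>'\<bar>\<bar> = L * \<bar>\<bar>\<delta>\<bar> - \<bar>\<delta>'\<bar>\<bar>" using L by (simp add: abs_mult right_diff_distrib[symmetric])
  also have "\<dots> \<le> L * \<bar>\<delta> - \<delta>'\<bar>" using L by (intro mult_left_mono) auto
  finally show ?thesis unfolding clip_def using clamp_lipschitz[of "L * \<bar>\<delta>\<bar>" F "L * \<bar>\<delta>'\<bar>" F'] by linarith
qed

lemma clip_bound: "0 \<le> L \<Longrightarrow> \<bar>clip L F \<delta>\<bar> \<le> L * \<bar>\<delta>\<bar>"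
  unfolding clip_def by (simp add: max_def min_def abs_if)

lemma clip_id: "\<bar>F\<bar> \<le> L * \<bar>\<delta>\<bar> \<Longrightarrow> clip L F \<delta> = F"
  unfolding clip_def by (simp add: max_def min_def abs_le_iff)

lemma sq_add_sq_pos: "0 < \<eta> \<Longrightarrow> 0 < \<delta>\<^sup>2 + \<eta>\<^sup>2" for \<eta> \<delta> :: real
  by (simp add: add_nonneg_pos)

lemma abs_div_sq_add_sq_le: "0 < \<eta> \<Longrightarrow> \<bar>x\<bar> / (x\<^sup>2 + \<eta>\<^sup>2) \<le> 1 / (2 * \<eta>)" for x \<eta> :: real
proof -
  assume e: "0 < \<eta>"
  have "0 \<le> (\<bar>x\<bar> - \<eta>)\<^sup>2" by simp
  then have "2 * \<eta> * \<bar>x\<bar> \<le> x\<^sup>2 + \<eta>\<^sup>2" by (simp add: power2_eq_square algebra_simps)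
  then show ?thesis using e sq_add_sq_pos[OF e, of x] by (simp add: field_simps)
qed

lemma sq_div_sq_add_sq_le_1: "0 < \<eta> \<Longrightarrow> \<eta>\<^sup>2 / (x\<^sup>2 + \<eta>\<^sup>2) \<le> 1" "0 < \<eta> \<Longrightarrow> x\<^sup>2 / (x\<^sup>2 + \<eta>\<^sup>2) \<le> 1" for x \<eta> :: real
  using sq_add_sq_pos[of \<eta> x] by (simp_all add: divide_le_eq_1)

lemma reg_inv_bound: "0 < \<eta> \<Longrightarrow> \<bar>reg_inv \<eta> \<delta>\<bar> \<le> 1 / (2 * \<eta>)"
  unfolding reg_inv_def using abs_div_sq_add_sq_le[of \<eta> \<delta>] sq_add_sq_pos[of \<eta> \<delta>] by simp

lemma abs_mult_reg_inv_diff_le: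
  assumes e: "0 < \<eta>"
  shows "\<bar>\<delta>\<bar> * \<bar>reg_inv \<eta> \<delta> - reg_inv \<eta> \<delta>'\<bar> \<le> (1 / \<eta>) * \<bar>\<delta> - \<delta>'\<bar>"
proof -
  define D where "D = \<delta>\<^sup>2 + \<eta>\<^sup>2"
  define D' where "D' = \<delta>'\<^sup>2 + \<eta>\<^sup>2"
  have D: "0 < D" "0 < D'" unfolding D_def D'_def using sq_add_sq_pos[OF e] by auto
  have e1: "reg_inv \<eta> \<delta> - reg_inv \<eta> \<delta>' = (\<delta> * D' - \<delta>' * D) / (D * D')"
    unfolding reg_inv_def D_def[symmetric] D'_def[symmetric] using D by (simp add: field_simps)
  have e2: "\<delta> * D' - \<delta>' * D = (\<delta> - \<delta>') * (\<eta>\<^sup>2 - \<delta> * \<delta>')"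
    unfolding D_def D'_def by (simp add: algebra_simps power2_eq_square)
  have eq: "reg_inv \<eta> \<delta> - reg_inv \<eta> \<delta>' = (\<delta> - \<delta>') * ((\<eta>\<^sup>2 - \<delta> * \<delta>') / (D * D'))"
    unfolding e1 e2 by simp
  have "\<bar>\<delta>\<bar> * \<bar>(\<eta>\<^sup>2 - \<delta> * \<delta>') / (D * D')\<bar> = \<bar>\<delta>\<bar> * \<bar>\<eta>\<^sup>2 - \<delta> * \<delta>'\<bar> / (D * D')"
    using D by (simp add: abs_divide)
  also have "\<dots> \<le> \<bar>\<delta>\<bar> * (\<eta>\<^sup>2 + \<bar>\<delta>\<bar> * \<bar>\<delta>'\<bar>) / (D * D')"
    using D by (intro divide_right_mono mult_left_mono) (auto simp: abs_mult intro: order_trans[OF abs_triangle_ineq4])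
  also have "\<dots> = (\<bar>\<delta>\<bar> / D) * (\<eta>\<^sup>2 / D') + (\<delta>\<^sup>2 / D) * (\<bar>\<delta>'\<bar> / D')"
    using D by (simp add: field_simps power2_eq_square)
  also have "\<dots> \<le> (1 / (2 * \<eta>)) * 1 + 1 * (1 / (2 * \<eta>))"
  proof (intro add_mono mult_mono)
    show "\<bar>\<delta>\<bar> / D \<le> 1 / (2 * \<eta>)" unfolding D_def by (rule abs_div_sq_add_sq_le[OF e])
    show "\<eta>\<^sup>2 / D' \<le> 1" unfolding D'_def by (rule sq_div_sq_add_sq_le_1[OF e])
    show "\<delta>\<^sup>2 / D \<le> 1" unfolding D_def by (rule sq_div_sq_add_sq_le_1[OF e])
    show "\<bar>\<delta>'\<bar> / D' \<le> 1 / (2 * \<eta>)" unfolding D'_def by (rule abs_div_sq_add_sq_le[OF e])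
  qed (use D e in auto)
  also have "\<dots> = 1 / \<eta>" by simp
  finally have q: "\<bar>\<delta>\<bar> * \<bar>(\<eta>\<^sup>2 - \<delta> * \<delta>') / (D * D')\<bar> \<le> 1 / \<eta>" .
  have "\<bar>\<delta>\<bar> * \<bar>reg_inv \<eta> \<delta> - reg_inv \<eta> \<delta>'\<bar> = \<bar>\<delta> - \<delta>'\<bar> * (\<bar>\<delta>\<bar> * \<bar>(\<eta>\<^sup>2 - \<delta> * \<delta>') / (D * D')\<bar>)"
    unfolding eq by (simp add: abs_mult ac_simps)
  also have "\<dots> \<le> \<bar>\<delta> - \<delta>'\<bar> * (1 / \<eta>)" using q by (intro mult_left_mono) auto
  finally show ?thesis by (simp add: ac_simps)
qed

lemma reg_weight_lipschitz:
  assumes e: "0 < \<eta>"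
  shows "\<bar>reg_weight \<eta> \<delta> - reg_weight \<eta> \<delta>'\<bar> \<le> (1 / \<eta>) * \<bar>\<delta> - \<delta>'\<bar>"
proof -
  define D where "D = \<delta>\<^sup>2 + \<eta>\<^sup>2"
  define D' where "D' = \<delta>'\<^sup>2 + \<eta>\<^sup>2"
  have D: "0 < D" "0 < D'" unfolding D_def D'_def using sq_add_sq_pos[OF e] by auto
  have e1: "reg_weight \<eta> \<delta> - reg_weight \<eta> \<delta>' = (\<eta>\<^sup>2 * D' - \<eta>\<^sup>2 * D) / (D * D')"
    unfolding reg_weight_def D_def[symmetric] D'_def[symmetric] using D by (simp add: field_simps)
  have e2: "\<eta>\<^sup>2 * D' - \<eta>\<^sup>2 * D = (\<delta>' - \<delta>) * (\<eta>\<^sup>2 * (\<delta>' + \<delta>))"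
    unfolding D_def D'_def by (simp add: algebra_simps power2_eq_square)
  have eq: "reg_weight \<eta> \<delta> - reg_weight \<eta> \<delta>' = (\<delta>' - \<delta>) * (\<eta>\<^sup>2 * (\<delta>' + \<delta>) / (D * D'))"
    unfolding e1 e2 by simp
  have "\<bar>\<eta>\<^sup>2 * (\<delta>' + \<delta>) / (D * D')\<bar> \<le> \<eta>\<^sup>2 * (\<bar>\<delta>'\<bar> + \<bar>\<delta>\<bar>) / (D * D')"
    using D by (simp add: abs_divide abs_mult divide_right_mono mult_left_mono abs_triangle_ineq)
  also have "\<dots> = (\<eta>\<^sup>2 / D) * (\<bar>\<delta>'\<bar> / D') + (\<bar>\<delta>\<bar> / D) * (\<eta>\<^sup>2 / D')"
    using D by (simp add: field_simps)
  also have "\<dots> \<le> 1 * (1 / (2 * \<eta>)) + (1 / (2 * \<eta>)) * 1"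
  proof (intro add_mono mult_mono)
    show "\<bar>\<delta>\<bar> / D \<le> 1 / (2 * \<eta>)" unfolding D_def by (rule abs_div_sq_add_sq_le[OF e])
    show "\<eta>\<^sup>2 / D' \<le> 1" unfolding D'_def by (rule sq_div_sq_add_sq_le_1[OF e])
    show "\<eta>\<^sup>2 / D \<le> 1" unfolding D_def by (rule sq_div_sq_add_sq_le_1[OF e])
    show "\<bar>\<delta>'\<bar> / D' \<le> 1 / (2 * \<eta>)" unfolding D'_def by (rule abs_div_sq_add_sq_le[OF e])
  qed (use D e in auto)
  also have "\<dots> = 1 / \<eta>" by simp
  finally have q: "\<bar>\<eta>\<^sup>2 * (\<delta>' + \<delta>) / (D * D')\<bar> \<le> 1 / \<eta>" .
  have "\<bar>reg_weight \<eta> \<delta> - reg_weight \<eta> \<delta>'\<bar> = \<bar>\<delta> - \<delta>'\<bar> * \<bar>\<eta>\<^sup>2 * (\<delta>' + \<delta>) / (D * D')\<bar>"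
    unfolding eq by (simp add: abs_mult abs_minus_commute)
  also have "\<dots> \<le> \<bar>\<delta> - \<delta>'\<bar> * (1 / \<eta>)" using q by (intro mult_left_mono) auto
  finally show ?thesis by (simp add: ac_simps)
qed

lemma reg_quot_lipschitz:
  assumes e: "0 < \<eta>" and L: "0 \<le> L"
  shows "\<bar>reg_quot L \<eta> F \<delta> - reg_quot L \<eta> F' \<delta>'\<bar> \<le> ((1 + 3 * L) / (2 * \<eta>)) * (\<bar>F - F'\<bar> + \<bar>\<delta> - \<delta>'\<bar>)"
proof -
  let ?c = "clip L F \<delta>" and ?c' = "clip L F' \<delta>'" and ?r = "reg_inv \<eta> \<delta>" and ?r' = "reg_inv \<eta> \<delta>'"
  have "\<bar>?c * ?r - ?c' * ?r'\<bar> = \<bar>?r' * (?c - ?c') + ?c * (?r - ?r')\<bar>" by (simp add: algebra_simps)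
  also have "\<dots> \<le> \<bar>?r'\<bar> * \<bar>?c - ?c'\<bar> + \<bar>?c\<bar> * \<bar>?r - ?r'\<bar>" by (metis abs_mult abs_triangle_ineq)
  also have "\<dots> \<le> (1 / (2 * \<eta>)) * (\<bar>F - F'\<bar> + L * \<bar>\<delta> - \<delta>'\<bar>) + L * ((1 / \<eta>) * \<bar>\<delta> - \<delta>'\<bar>)"
  proof (rule add_mono)
    show "\<bar>?r'\<bar> * \<bar>?c - ?c'\<bar> \<le> (1 / (2 * \<eta>)) * (\<bar>F - F'\<bar> + L * \<bar>\<delta> - \<delta>'\<bar>)"
      using reg_inv_bound[OF e] clip_lipschitz[OF L] e by (intro mult_mono) auto
    have "\<bar>?c\<bar> * \<bar>?r - ?r'\<bar> \<le> (L * \<bar>\<delta>\<bar>) * \<bar>?r - ?r'\<bar>"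
      using clip_bound[OF L] by (intro mult_right_mono) auto
    also have "\<dots> = L * (\<bar>\<delta>\<bar> * \<bar>?r - ?r'\<bar>)" by simp
    also have "\<dots> \<le> L * ((1 / \<eta>) * \<bar>\<delta> - \<delta>'\<bar>)" using abs_mult_reg_inv_diff_le[OF e] L by (intro mult_left_mono) auto
    finally show "\<bar>?c\<bar> * \<bar>?r - ?r'\<bar> \<le> L * ((1 / \<eta>) * \<bar>\<delta> - \<delta>'\<bar>)" .
  qed
  also have "\<dots> = (1 / (2 * \<eta>)) * \<bar>F - F'\<bar> + (3 * L / (2 * \<eta>)) * \<bar>\<delta> - \<delta>'\<bar>"
    using e by (simp add: field_simps)
  also have "\<dots> \<le> ((1 + 3 * L) / (2 * \<eta>)) * \<bar>F - F'\<bar> + ((1 + 3 * L) / (2 * \<eta>)) * \<bar>\<delta> - \<delta>'\<bar>"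
    using e L by (intro add_mono mult_right_mono divide_right_mono) auto
  finally show ?thesis unfolding reg_quot_def by (simp only: distrib_left)
qed



lemma Gfun_pos_homogeneous:
  assumes k: "0 \<le> k" shows "Gfun sl su (k * x) = k * Gfun sl su x"
proof -
  have m1: "max (k * x) 0 = k * max x 0" using k by (simp add: max_mult_distrib_left)
  have m2: "max (- (k * x)) 0 = k * max (- x) 0" using k by (simp add: max_mult_distrib_left)
  show ?thesis unfolding Gfun_def m1 m2 by (simp add: algebra_simps)
qed

lemma reg_quot_bound:
  assumes e: "0 < \<eta>" and L: "0 \<le> L" shows "\<bar>reg_quot L \<eta> F \<delta>\<bar> \<le> L"
proof -
  have "\<bar>reg_quot L \<eta> F \<delta>\<bar> = \<bar>clip L F \<delta>\<bar> * (\<bar>\<delta>\<bar> / (\<delta>\<^sup>2 + \<eta>\<^sup>2))"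
    unfolding reg_quot_def reg_inv_def using sq_add_sq_pos[OF e, of \<delta>] by (simp add: abs_mult abs_divide)
  also have "\<dots> \<le> (L * \<bar>\<delta>\<bar>) * (\<bar>\<delta>\<bar> / (\<delta>\<^sup>2 + \<eta>\<^sup>2))"
    using clip_bound[OF L] sq_add_sq_pos[OF e, of \<delta>] by (intro mult_right_mono) auto
  also have "\<dots> = L * (\<delta>\<^sup>2 / (\<delta>\<^sup>2 + \<eta>\<^sup>2))" by (simp add: power2_eq_square abs_mult_self)
  also have "\<dots> \<le> L * 1" using sq_div_sq_add_sq_le_1(2)[OF e, of \<delta>] L by (intro mult_left_mono) auto
  finally show ?thesis by simp
qed

lemma reg_weight_bounds: "0 < \<eta> \<Longrightarrow> 0 \<le> reg_weight \<eta> \<delta> \<and> reg_weight \<eta> \<delta> \<le> 1"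
  unfolding reg_weight_def using sq_div_sq_add_sq_le_1(1)[of \<eta> \<delta>] sq_add_sq_pos[of \<eta> \<delta>] by simp

lemma reg_quot_linearization_error:
  assumes e: "0 < \<eta>" and L: "0 \<le> L" and F: "\<bar>F\<bar> \<le> L * \<bar>\<delta>\<bar>"
  shows "\<bar>F - reg_quot L \<eta> F \<delta> * \<delta>\<bar> \<le> L * \<eta> / 2"
proof -
  define D where "D = \<delta>\<^sup>2 + \<eta>\<^sup>2"
  have D: "0 < D" unfolding D_def using sq_add_sq_pos[OF e] .
  have q1: "F * \<eta>\<^sup>2 / D = F * (D - \<delta>\<^sup>2) / D" by (simp add: D_def)
  also have "\<dots> = F - F * \<delta>\<^sup>2 / D" using D by (simp add: right_diff_distrib diff_divide_distrib)
  finally have q: "F * \<eta>\<^sup>2 / D = F - F * \<delta>\<^sup>2 / D" .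
  have "F - reg_quot L \<eta> F \<delta> * \<delta> = F * \<eta>\<^sup>2 / D"
    unfolding q reg_quot_def reg_inv_def clip_id[OF F] D_def[symmetric] by (simp add: power2_eq_square)
  also have "\<bar>\<dots>\<bar> = \<bar>F\<bar> * \<eta>\<^sup>2 / D" using D by (simp add: abs_mult)
  also have "\<dots> \<le> L * \<bar>\<delta>\<bar> * \<eta>\<^sup>2 / D" using F D by (intro divide_right_mono mult_right_mono) auto
  also have "\<dots> = L * \<eta>\<^sup>2 * (\<bar>\<delta>\<bar> / D)" by simp
  also have "\<dots> \<le> L * \<eta>\<^sup>2 * (1 / (2 * \<eta>))" unfolding D_def using abs_div_sq_add_sq_le[OF e] L by (intro mult_left_mono) auto
  also have "\<dots> = L * \<eta> / 2" using e by (simp add: power2_eq_square)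
  finally show ?thesis .
qed

lemma reg_weight_mult_bound:
  assumes e: "0 < \<eta>" shows "\<bar>reg_weight \<eta> \<delta> * \<delta>\<bar> \<le> \<eta> / 2"
proof -
  have "\<bar>reg_weight \<eta> \<delta> * \<delta>\<bar> = \<eta>\<^sup>2 * (\<bar>\<delta>\<bar> / (\<delta>\<^sup>2 + \<eta>\<^sup>2))"
    unfolding reg_weight_def using sq_add_sq_pos[OF e, of \<delta>] by (simp add: abs_mult)
  also have "\<dots> \<le> \<eta>\<^sup>2 * (1 / (2 * \<eta>))" using abs_div_sq_add_sq_le[OF e] by (intro mult_left_mono) auto
  also have "\<dots> = \<eta> / 2" using e by (simp add: power2_eq_square)
  finally show ?thesis .
qed


lemma reg_quot_dissipative:
  assumes \<eta>: "0 < \<eta>" and F: "\<bar>F\<bar> \<le> L * \<bar>\<delta>\<bar>" and G: "\<bar>G\<bar> \<le> L * \<bar>\<delta>\<bar>"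
    and H: "F * \<delta> + 2 * Gfun sl su (G * \<delta>) \<le> - \<mu> * \<bar>\<delta>\<bar>\<^sup>2"
  shows "reg_quot L \<eta> F \<delta> - \<mu> * reg_weight \<eta> \<delta> + 2 * Gfun sl su (reg_quot L \<eta> G \<delta>) \<le> - \<mu>"
proof -
  define D where "D = \<delta>\<^sup>2 + \<eta>\<^sup>2"
  have D: "0 < D" unfolding D_def using sq_add_sq_pos[OF \<eta>] .
  have "reg_quot L \<eta> G \<delta> = (1 / D) * (G * \<delta>)"
    unfolding reg_quot_def reg_inv_def clip_id[OF G] D_def by simp
  then have "Gfun sl su (reg_quot L \<eta> G \<delta>) = (1 / D) * Gfun sl su (G * \<delta>)"
    using D Gfun_pos_homogeneous[of "1 / D" sl su "G * \<delta>"] by simp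
  moreover have "reg_quot L \<eta> F \<delta> - \<mu> * reg_weight \<eta> \<delta> = (F * \<delta> - \<mu> * \<eta>\<^sup>2) / D"
    unfolding reg_quot_def reg_inv_def reg_weight_def clip_id[OF F] D_def by (simp add: diff_divide_distrib)
  ultimately have "reg_quot L \<eta> F \<delta> - \<mu> * reg_weight \<eta> \<delta> + 2 * Gfun sl su (reg_quot L \<eta> G \<delta>)
      = (F * \<delta> + 2 * Gfun sl su (G * \<delta>) - \<mu> * \<eta>\<^sup>2) / D"
    using D by (simp add: field_simps)
  also have "\<dots> \<le> (- \<mu> * \<delta>\<^sup>2 - \<mu> * \<eta>\<^sup>2) / D"
    using H D by (intro divide_right_mono) auto
  also have "\<dots> = - \<mu> * D / D" unfolding D_def by (simp add: algebra_simps)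
  also have "\<dots> = - \<mu>" using D by simp
  finally show ?thesis .
qed

definition quot_y :: "real \<Rightarrow> real \<Rightarrow> (real \<Rightarrow> real \<Rightarrow> real) \<Rightarrow> real \<Rightarrow> real \<Rightarrow> real \<Rightarrow> real" where
  "quot_y L \<eta> F y y' z = reg_quot L \<eta> (F y z - F y' z) (y - y')"

definition quot_z :: "real \<Rightarrow> real \<Rightarrow> (real \<Rightarrow> real \<Rightarrow> real) \<Rightarrow> real \<Rightarrow> real \<Rightarrow> real \<Rightarrow> real" where
  "quot_z L \<eta> F z z' y' = reg_quot L \<eta> (F y' z - F y' z') (z - z')"

lemma lipschitz2_diff_le:
  fixes F :: "real \<Rightarrow> real \<Rightarrow> real"
  assumes "\<And>y y' z z'. \<bar>F y z - F y' z'\<bar> \<le> L * (\<bar>y - y'\<bar> + \<bar>z - z'\<bar>)"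
  shows "\<bar>F y z - F y' z\<bar> \<le> L * \<bar>y - y'\<bar>" "\<bar>F y' z - F y' z'\<bar> \<le> L * \<bar>z - z'\<bar>" "0 \<le> L"
  using assms[of y z y' z] assms[of y' z y' z'] assms[of 1 0 0 0] by auto

lemma quot_linearization_error:
  assumes "0 < \<eta>" and lip: "\<And>y y' z z'. \<bar>F y z - F y' z'\<bar> \<le> L * (\<bar>y - y'\<bar> + \<bar>z - z'\<bar>)"
  shows "\<bar>F y z - F y' z' - quot_y L \<eta> F y y' z * (y - y') - quot_z L \<eta> F z z' y' * (z - z')\<bar> \<le> L * \<eta>"
proof -
  have "\<bar>F y z - F y' z - quot_y L \<eta> F y y' z * (y - y')\<bar> \<le> L * \<eta> / 2"
    "\<bar>F y' z - F y' z' - quot_z L \<eta> F z z' y' * (z - z')\<bar> \<le> L * \<eta> / 2"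
    unfolding quot_y_def quot_z_def using lipschitz2_diff_le[OF lip]
    by (intro reg_quot_linearization_error[OF \<open>0 < \<eta>\<close>]; simp)+
  then show ?thesis by linarith
qed

lemma quot_bound:
  assumes "0 < \<eta>" "0 \<le> L"
  shows "\<bar>quot_y L \<eta> F y y' z\<bar> \<le> L" "\<bar>quot_z L \<eta> F z z' y'\<bar> \<le> L"
  unfolding quot_y_def quot_z_def using reg_quot_bound[OF assms] by auto

text \<open>The correction \<open>- \<mu> \<eta>\<^sup>2 / (\<delta>\<^sup>2 + \<eta>\<^sup>2)\<close> turns the bound \<open>- \<mu> \<delta>\<^sup>2\<close> of (H3)
  into \<open>- \<mu> (\<delta>\<^sup>2 + \<eta>\<^sup>2)\<close>, which is exactly \<open>- \<mu>\<close> times the common denominator.\<close>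

definition drift_quot :: "real \<Rightarrow> real \<Rightarrow> real \<Rightarrow> (real \<Rightarrow> real \<Rightarrow> real) \<Rightarrow> real \<Rightarrow> real \<Rightarrow> real \<Rightarrow> real" where
  "drift_quot L \<mu> \<eta> F y y' z = quot_y L \<eta> F y y' z - \<mu> * reg_weight \<eta> (y - y')"

lemma drift_quot_dissipative:
  assumes "0 < \<eta>"
    and lipF: "\<And>y y' z z'. \<bar>F y z - F y' z'\<bar> \<le> L * (\<bar>y - y'\<bar> + \<bar>z - z'\<bar>)"
    and lipG: "\<And>y y' z z'. \<bar>G y z - G y' z'\<bar> \<le> L * (\<bar>y - y'\<bar> + \<bar>z - z'\<bar>)"
    and H: "(F y z - F y' z) * (y - y') + 2 * Gfun sl su ((G y z - G y' z) * (y - y')) \<le> - \<mu> * \<bar>y - y'\<bar>\<^sup>2"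
  shows "drift_quot L \<mu> \<eta> F y y' z + 2 * Gfun sl su (quot_y L \<eta> G y y' z) \<le> - \<mu>"
  unfolding drift_quot_def quot_y_def
  by (rule reg_quot_dissipative[OF \<open>0 < \<eta>\<close> lipschitz2_diff_le(1)[OF lipF] lipschitz2_diff_le(1)[OF lipG] H])

lemma drift_quot_linearization_error:
  assumes "0 < \<eta>" "0 \<le> \<mu>" and lip: "\<And>y y' z z'. \<bar>F y z - F y' z'\<bar> \<le> L * (\<bar>y - y'\<bar> + \<bar>z - z'\<bar>)"
  shows "\<bar>F y z - F y' z' - drift_quot L \<mu> \<eta> F y y' z * (y - y') - quot_z L \<eta> F z z' y' * (z - z')\<bar>
    \<le> L * \<eta> + \<mu> * \<eta> / 2"
proof -
  have "\<bar>\<mu> * (reg_weight \<eta> (y - y') * (y - y'))\<bar> = \<mu> * \<bar>reg_weight \<eta> (y - y') * (y - y')\<bar>"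
    using \<open>0 \<le> \<mu>\<close> by (simp add: abs_mult)
  also have "\<dots> \<le> \<mu> * (\<eta> / 2)"
    using reg_weight_mult_bound[OF \<open>0 < \<eta>\<close>] \<open>0 \<le> \<mu>\<close> by (rule mult_left_mono)
  finally have "\<bar>\<mu> * (reg_weight \<eta> (y - y') * (y - y'))\<bar> \<le> \<mu> * \<eta> / 2" by simp
  moreover have "F y z - F y' z' - drift_quot L \<mu> \<eta> F y y' z * (y - y') - quot_z L \<eta> F z z' y' * (z - z')
      = (F y z - F y' z' - quot_y L \<eta> F y y' z * (y - y') - quot_z L \<eta> F z z' y' * (z - z'))
        + \<mu> * (reg_weight \<eta> (y - y') * (y - y'))"
    unfolding drift_quot_def by (simp add: algebra_simps)
  ultimately show ?thesis
    using quot_linearization_error[OF \<open>0 < \<eta>\<close> lip, of y z y' z'] abs_triangle_ineq by (smt (verit))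
qed

lemma drift_quot_bound:
  assumes "0 < \<eta>" "0 \<le> L" "0 \<le> \<mu>"
  shows "\<bar>drift_quot L \<mu> \<eta> F y y' z\<bar> \<le> L + \<mu>"
proof -
  have "\<bar>\<mu> * reg_weight \<eta> (y - y')\<bar> \<le> \<mu>"
    using reg_weight_bounds[OF \<open>0 < \<eta>\<close>, of "y - y'"] \<open>0 \<le> \<mu>\<close> by (simp add: abs_mult mult_left_le)
  then show ?thesis
    unfolding drift_quot_def using quot_bound(1)[OF assms(1,2), of F y y' z] by linarith
qed

lemma MG_reg_weight:
  assumes T: "0 < T" and "0 < \<eta>" and Y: "Y \<in> MG sl su 2 T" and Y': "Y' \<in> MG sl su 2 T"
  shows "(\<lambda>t w. c * reg_weight \<eta> (Y t w - Y' t w)) \<in> MG sl su 2 T"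
proof -
  have "\<bar>c * reg_weight \<eta> a - c * reg_weight \<eta> a'\<bar> \<le> (\<bar>c\<bar> / \<eta>) * (\<bar>a - a'\<bar> + \<bar>b - b'\<bar>)" for a b a' b'
  proof -
    have "\<bar>c * reg_weight \<eta> a - c * reg_weight \<eta> a'\<bar> = \<bar>c\<bar> * \<bar>reg_weight \<eta> a - reg_weight \<eta> a'\<bar>"
      by (simp add: abs_mult right_diff_distrib[symmetric])
    also have "\<dots> \<le> \<bar>c\<bar> * ((1 / \<eta>) * \<bar>a - a'\<bar>)"
      by (intro mult_left_mono reg_weight_lipschitz[OF \<open>0 < \<eta>\<close>]) simp
    also have "\<dots> \<le> (\<bar>c\<bar> / \<eta>) * (\<bar>a - a'\<bar> + \<bar>b - b'\<bar>)"
      using \<open>0 < \<eta>\<close> by (simp add: divide_right_mono mult_left_mono)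
    finally show ?thesis .
  qed
  from MG_comp2[OF T this MG_diff[OF T Y Y'] Y] show ?thesis .
qed

lemma MG_quot_y:
  assumes T: "0 < T" and "0 < \<eta>" and fam: "\<And>y z. (\<lambda>t w. \<phi> t w y z) \<in> MG sl su 2 T"
    and lip: "\<And>t w y y' z z'. 0 \<le> t \<Longrightarrow> \<bar>\<phi> t w y z - \<phi> t w y' z'\<bar> \<le> L * (\<bar>y - y'\<bar> + \<bar>z - z'\<bar>)"
    and Y: "Y \<in> MG sl su 2 T" and Y': "Y' \<in> MG sl su 2 T" and Z: "Z \<in> MG sl su 2 T"
  shows "(\<lambda>t w. quot_y L \<eta> (\<phi> t w) (Y t w) (Y' t w) (Z t w)) \<in> MG sl su 2 T"
  unfolding quot_y_def
  using MG_comp2[OF T reg_quot_lipschitz[OF \<open>0 < \<eta>\<close> lipschitz2_diff_le(3)[OF lip[OF order_refl]]]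
      MG_diff[OF T MG_subst2[OF T fam lip Y Z] MG_subst2[OF T fam lip Y' Z]] MG_diff[OF T Y Y']] .

lemma MG_quot_z:
  assumes T: "0 < T" and "0 < \<eta>" and fam: "\<And>y z. (\<lambda>t w. \<phi> t w y z) \<in> MG sl su 2 T"
    and lip: "\<And>t w y y' z z'. 0 \<le> t \<Longrightarrow> \<bar>\<phi> t w y z - \<phi> t w y' z'\<bar> \<le> L * (\<bar>y - y'\<bar> + \<bar>z - z'\<bar>)"
    and Z: "Z \<in> MG sl su 2 T" and Z': "Z' \<in> MG sl su 2 T" and Y': "Y' \<in> MG sl su 2 T"
  shows "(\<lambda>t w. quot_z L \<eta> (\<phi> t w) (Z t w) (Z' t w) (Y' t w)) \<in> MG sl su 2 T"
  unfolding quot_z_def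
  using MG_comp2[OF T reg_quot_lipschitz[OF \<open>0 < \<eta>\<close> lipschitz2_diff_le(3)[OF lip[OF order_refl]]]
      MG_diff[OF T MG_subst2[OF T fam lip Y' Z] MG_subst2[OF T fam lip Y' Z']] MG_diff[OF T Z Z']] .

lemma MG_drift_quot:
  assumes T: "0 < T" and "0 < \<eta>" and fam: "\<And>y z. (\<lambda>t w. \<phi> t w y z) \<in> MG sl su 2 T"
    and lip: "\<And>t w y y' z z'. 0 \<le> t \<Longrightarrow> \<bar>\<phi> t w y z - \<phi> t w y' z'\<bar> \<le> L * (\<bar>y - y'\<bar> + \<bar>z - z'\<bar>)"
    and Y: "Y \<in> MG sl su 2 T" and Y': "Y' \<in> MG sl su 2 T" and Z: "Z \<in> MG sl su 2 T"
  shows "(\<lambda>t w. drift_quot L \<mu> \<eta> (\<phi> t w) (Y t w) (Y' t w) (Z t w)) \<in> MG sl su 2 T"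
  unfolding drift_quot_def
  by (rule MG_diff[OF T MG_quot_y[OF assms] MG_reg_weight[OF T \<open>0 < \<eta>\<close> Y Y']])

lemma dissipative_imp_lipschitz_pos:
  assumes "\<bar>F\<bar> \<le> L" "\<bar>G\<bar> \<le> L" "F + 2 * Gfun sl su G \<le> - \<mu>" "0 < \<mu>"
  shows "0 < L"
proof (rule ccontr)
  assume "\<not> 0 < L"
  with assms(1,2) have "F = 0" "G = 0" by auto
  with assms(3,4) show False by (simp add: Gfun_def)
qed

lemma coefficients_bounded:
  assumes "0 < \<eta>" "0 \<le> L" "0 \<le> \<mu>"
  shows "\<exists>C. \<forall>s w u v x. 0 \<le> s \<longrightarrow>
    \<bar>drift_quot L \<mu> \<eta> (f s w) u v x\<bar> \<le> C \<and> \<bar>quot_z L \<eta> (f s w) u v x\<bar> \<le> C \<and>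
    \<bar>quot_y L \<eta> (g s w) u v x\<bar> \<le> C \<and> \<bar>quot_z L \<eta> (g s w) u v x\<bar> \<le> C"
proof (intro exI[of _ "L + \<mu>"] allI impI conjI)
  fix s w u v x
  show "\<bar>drift_quot L \<mu> \<eta> (f s w) u v x\<bar> \<le> L + \<mu>" by (rule drift_quot_bound[OF assms])
  show "\<bar>quot_z L \<eta> (f s w) u v x\<bar> \<le> L + \<mu>" "\<bar>quot_y L \<eta> (g s w) u v x\<bar> \<le> L + \<mu>"
    "\<bar>quot_z L \<eta> (g s w) u v x\<bar> \<le> L + \<mu>"
    using quot_bound[OF assms(1,2)] \<open>0 \<le> \<mu>\<close> by (meson add_increasing2)+
qed

lemma coefficients_linearization:
  fixes f g :: "real \<Rightarrow> path \<Rightarrow> real \<Rightarrow> real \<Rightarrow> real"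
  assumes "0 < \<eta>" "0 \<le> \<mu>" "L * \<eta> + \<mu> * \<eta> / 2 \<le> E"
    and Hf: "\<And>t w y y' z z'. 0 \<le> t \<Longrightarrow> \<bar>f t w y z - f t w y' z'\<bar> \<le> L * (\<bar>y - y'\<bar> + \<bar>z - z'\<bar>)"
    and Hg: "\<And>t w y y' z z'. 0 \<le> t \<Longrightarrow> \<bar>g t w y z - g t w y' z'\<bar> \<le> L * (\<bar>y - y'\<bar> + \<bar>z - z'\<bar>)"
    and H3: "\<And>t w y y' z. 0 \<le> t \<Longrightarrow>
      (f t w y z - f t w y' z) * (y - y') + 2 * Gfun sl su ((g t w y z - g t w y' z) * (y - y')) \<le> - \<mu> * \<bar>y - y'\<bar>\<^sup>2"
  shows "\<forall>s w y y' z z'. 0 \<le> s \<longrightarrow>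
    drift_quot L \<mu> \<eta> (f s w) y y' z + 2 * Gfun sl su (quot_y L \<eta> (g s w) y y' z) \<le> - \<mu> \<and>
    \<bar>f s w y z - f s w y' z' - drift_quot L \<mu> \<eta> (f s w) y y' z * (y - y') - quot_z L \<eta> (f s w) z z' y' * (z - z')\<bar> \<le> E \<and>
    \<bar>g s w y z - g s w y' z' - quot_y L \<eta> (g s w) y y' z * (y - y') - quot_z L \<eta> (g s w) z z' y' * (z - z')\<bar> \<le> E"
proof (intro allI impI conjI)
  fix s y y' z z' :: real and w :: path assume "0 \<le> s"
  show "drift_quot L \<mu> \<eta> (f s w) y y' z + 2 * Gfun sl su (quot_y L \<eta> (g s w) y y' z) \<le> - \<mu>"
    by (rule drift_quot_dissipative[OF \<open>0 < \<eta>\<close> Hf Hg H3]) (use \<open>0 \<le> s\<close> in auto)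
  show "\<bar>f s w y z - f s w y' z' - drift_quot L \<mu> \<eta> (f s w) y y' z * (y - y') - quot_z L \<eta> (f s w) z z' y' * (z - z')\<bar> \<le> E"
    using drift_quot_linearization_error[OF assms(1,2) Hf[OF \<open>0 \<le> s\<close>]] assms(3) by (rule order_trans)
  have "0 \<le> \<mu> * \<eta>" using assms(1,2) by simp
  then show "\<bar>g s w y z - g s w y' z' - quot_y L \<eta> (g s w) y y' z * (y - y') - quot_z L \<eta> (g s w) z z' y' * (z - z')\<bar> \<le> E"
    using quot_linearization_error[OF assms(1) Hg[OF \<open>0 \<le> s\<close>, of w], of y z y' z'] assms(3) by linarith
qed

lemma coefficients_MG:
  assumes "0 < \<eta>"
    and fam_f: "\<And>T y z. 0 < T \<Longrightarrow> (\<lambda>t w. f t w y z) \<in> MG sl su 2 T"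
    and fam_g: "\<And>T y z. 0 < T \<Longrightarrow> (\<lambda>t w. g t w y z) \<in> MG sl su 2 T"
    and Hf: "\<And>t w y y' z z'. 0 \<le> t \<Longrightarrow> \<bar>f t w y z - f t w y' z'\<bar> \<le> L * (\<bar>y - y'\<bar> + \<bar>z - z'\<bar>)"
    and Hg: "\<And>t w y y' z z'. 0 \<le> t \<Longrightarrow> \<bar>g t w y z - g t w y' z'\<bar> \<le> L * (\<bar>y - y'\<bar> + \<bar>z - z'\<bar>)"
  shows "\<forall>T>0. \<forall>Y\<in>MG sl su 2 T. \<forall>Y'\<in>MG sl su 2 T. \<forall>Z\<in>MG sl su 2 T. \<forall>Z'\<in>MG sl su 2 T.
    (\<lambda>s w. drift_quot L \<mu> \<eta> (f s w) (Y s w) (Y' s w) (Z s w)) \<in> MG sl su 2 T \<and>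
    (\<lambda>s w. quot_z L \<eta> (f s w) (Z s w) (Z' s w) (Y' s w)) \<in> MG sl su 2 T \<and>
    (\<lambda>s w. quot_y L \<eta> (g s w) (Y s w) (Y' s w) (Z s w)) \<in> MG sl su 2 T \<and>
    (\<lambda>s w. quot_z L \<eta> (g s w) (Z s w) (Z' s w) (Y' s w)) \<in> MG sl su 2 T"
proof (intro allI impI ballI conjI)
  fix T :: real and Y Y' Z Z' assume T: "0 < T"
    and MG: "Y \<in> MG sl su 2 T" "Y' \<in> MG sl su 2 T" "Z \<in> MG sl su 2 T" "Z' \<in> MG sl su 2 T"
  show "(\<lambda>s w. drift_quot L \<mu> \<eta> (f s w) (Y s w) (Y' s w) (Z s w)) \<in> MG sl su 2 T"
    by (rule MG_drift_quot[OF T \<open>0 < \<eta>\<close> fam_f[OF T] Hf MG(1,2,3)])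
  show "(\<lambda>s w. quot_z L \<eta> (f s w) (Z s w) (Z' s w) (Y' s w)) \<in> MG sl su 2 T"
    by (rule MG_quot_z[OF T \<open>0 < \<eta>\<close> fam_f[OF T] Hf MG(3,4,2)])
  show "(\<lambda>s w. quot_y L \<eta> (g s w) (Y s w) (Y' s w) (Z s w)) \<in> MG sl su 2 T"
    by (rule MG_quot_y[OF T \<open>0 < \<eta>\<close> fam_g[OF T] Hg MG(1,2,3)])
  show "(\<lambda>s w. quot_z L \<eta> (g s w) (Z s w) (Z' s w) (Y' s w)) \<in> MG sl su 2 T"
    by (rule MG_quot_z[OF T \<open>0 < \<eta>\<close> fam_g[OF T] Hg MG(3,4,2)])
qed

theorem lemma3p1:
  fixes sl su L1 \<mu> \<epsilon> :: real
    and f g :: "real \<Rightarrow> path \<Rightarrow> real \<Rightarrow> real \<Rightarrow> real"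
  assumes sl_pos: "0 < sl" and sl_le: "sl \<le> su"
    and H1: "\<exists>\<beta>>0. \<forall>y z (n::nat). n > 0 \<longrightarrow>
               (\<lambda>t w. f t w y z) \<in> MG sl su (2 + \<beta>) (real n) \<and>
               (\<lambda>t w. g t w y z) \<in> MG sl su (2 + \<beta>) (real n)"
    and H2: "\<And>t w y y' z z'. 0 \<le> t \<Longrightarrow>
               \<bar>f t w y z - f t w y' z'\<bar> + \<bar>g t w y z - g t w y' z'\<bar>
                 \<le> L1 * (\<bar>y - y'\<bar> + \<bar>z - z'\<bar>)"
    and mu_pos: "0 < \<mu>"
    and H3: "\<And>t w y y' z. 0 \<le> t \<Longrightarrow>
               (f t w y z - f t w y' z) * (y - y')
                 + 2 * Gfun sl su ((g t w y z - g t w y' z) * (y - y'))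
                 \<le> - \<mu> * \<bar>y - y'\<bar>\<^sup>2"
    and eps_pos: "0 < \<epsilon>"
  shows "\<exists>a b c d :: real \<Rightarrow> path \<Rightarrow> real \<Rightarrow> real \<Rightarrow> real \<Rightarrow> real.
     (\<exists>C. \<forall>s w u v x. 0 \<le> s \<longrightarrow>
          \<bar>a s w u v x\<bar> \<le> C \<and> \<bar>b s w u v x\<bar> \<le> C \<and> \<bar>c s w u v x\<bar> \<le> C \<and> \<bar>d s w u v x\<bar> \<le> C) \<and>
     (\<forall>s w y y' z z'. 0 \<le> s \<longrightarrow>
          a s w y y' z + 2 * Gfun sl su (c s w y y' z) \<le> - \<mu> \<and>
          \<bar>f s w y z - f s w y' z' - a s w y y' z * (y - y') - b s w z z' y' * (z - z')\<bar>
            \<le> 4 * L1 * \<epsilon> \<and>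
          \<bar>g s w y z - g s w y' z' - c s w y y' z * (y - y') - d s w z z' y' * (z - z')\<bar>
            \<le> 4 * L1 * \<epsilon>) \<and>
     (\<forall>T>0. \<forall>Y\<in>MG sl su 2 T. \<forall>Y'\<in>MG sl su 2 T. \<forall>Z\<in>MG sl su 2 T. \<forall>Z'\<in>MG sl su 2 T.
          (\<lambda>s w. a s w (Y s w) (Y' s w) (Z s w)) \<in> MG sl su 2 T \<and>
          (\<lambda>s w. b s w (Z s w) (Z' s w) (Y' s w)) \<in> MG sl su 2 T \<and>
          (\<lambda>s w. c s w (Y s w) (Y' s w) (Z s w)) \<in> MG sl su 2 T \<and>
          (\<lambda>s w. d s w (Z s w) (Z' s w) (Y' s w)) \<in> MG sl su 2 T)"
proof -
  obtain \<beta> where \<beta>: "0 < \<beta>" "\<forall>y z (n::nat). n > 0 \<longrightarrow>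
      (\<lambda>t w. f t w y z) \<in> MG sl su (2 + \<beta>) (real n) \<and> (\<lambda>t w. g t w y z) \<in> MG sl su (2 + \<beta>) (real n)"
    using H1 by blast
  have Hf: "\<bar>f t w y z - f t w y' z'\<bar> \<le> L1 * (\<bar>y - y'\<bar> + \<bar>z - z'\<bar>)"
    and Hg: "\<bar>g t w y z - g t w y' z'\<bar> \<le> L1 * (\<bar>y - y'\<bar> + \<bar>z - z'\<bar>)" if "0 \<le> t" for t w y y' z z'
    using H2[OF that, of w y z y' z'] by linarith+
  have "0 < L1"
    using dissipative_imp_lipschitz_pos[OF _ _ _ mu_pos] Hf[of 0 undefined 1 0 0 0] Hg[of 0 undefined 1 0 0 0]
      H3[of 0 undefined 1 0 0] by simp
  \<comment> \<open>chosen so that the linearisation error \<open>(L1 + \<mu>/2) \<eta>\<close> of the drift coefficient is \<open>L1 \<epsilon>\<close>\<close>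
  define \<eta> where "\<eta> = 2 * L1 * \<epsilon> / (2 * L1 + \<mu>)"
  have "0 < \<eta>" unfolding \<eta>_def using \<open>0 < L1\<close> mu_pos eps_pos by simp
  have "(2 * L1 + \<mu>) * \<eta> = 2 * L1 * \<epsilon>" unfolding \<eta>_def using \<open>0 < L1\<close> mu_pos by simp
  then have "L1 * \<eta> + \<mu> * \<eta> / 2 = L1 * \<epsilon>" by (auto simp: algebra_simps)
  moreover have "L1 * \<epsilon> \<le> 4 * L1 * \<epsilon>" using \<open>0 < L1\<close> eps_pos by simp
  ultimately have "L1 * \<eta> + \<mu> * \<eta> / 2 \<le> 4 * L1 * \<epsilon>" by linarith
  have fam: "(\<lambda>t w. f t w y z) \<in> MG sl su 2 T" "(\<lambda>t w. g t w y z) \<in> MG sl su 2 T" if "0 < T" for T y z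
    using MG_of_higher_moment[OF that \<beta>(1)] \<beta>(2) by blast+
  note bounded = coefficients_bounded[OF \<open>0 < \<eta>\<close> less_imp_le[OF \<open>0 < L1\<close>] less_imp_le[OF mu_pos], of f g]
  note linearization = coefficients_linearization[OF \<open>0 < \<eta>\<close> less_imp_le[OF mu_pos]
      \<open>L1 * \<eta> + \<mu> * \<eta> / 2 \<le> 4 * L1 * \<epsilon>\<close> Hf Hg H3]
  note in_MG = coefficients_MG[OF \<open>0 < \<eta>\<close> fam Hf Hg, of \<mu>]
  show ?thesis
    by (rule exI[of _ "\<lambda>s w. drift_quot L1 \<mu> \<eta> (f s w)"], rule exI[of _ "\<lambda>s w. quot_z L1 \<eta> (f s w)"],
        rule exI[of _ "\<lambda>s w. quot_y L1 \<eta> (g s w)"], rule exI[of _ "\<lambda>s w. quot_z L1 \<eta> (g s w)"])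
      (intro conjI bounded linearization in_MG)
qed

end
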